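(* For every bi-separated graph with distinguished subsets $\dot E=(E,(C,S),(D,T))$, the natural $K$-algebra homomorphism from the path algebra $K(E)$ to $\mathcal A_K(\dot E)$ (sending each vertex and edge to its class) is injective.
   Context: $K$ is a field. A graph $E=(E^0,E^1,r,s)$; its path algebra $K(E)$ is the free $K$-algebra on $E^0\cup E^1$ modulo $vw=\delta_{vw}v$ and $s(e)e=e=er(e)$. A bi-separated graph with distinguished subsets is $\dot E=(E,(C,S),(D,T))$ where $C=\bigsqcup_v C_v$, $C_v$ a partition of $s^{-1}(v)$ into nonempty sets for each non-sink $v$; $D=\bigsqcup_v D_v$, $D_v$ a partition of $r^{-1}(v)$ for each non-source $v$; $|X\cap Y|\le1$ for $X\in C,Y\in D$; $S\subseteq C_{\rm fin}=\{X\in C:|X|<\infty\}$, $T\subseteq D_{\rm fin}=\{Y\in D:|Y|<\infty\}$. For $X\in C$, $s(X)$ is the common source of its edges; for $Y\in D$, $r(Y)$ the common range; $XY=YX$ is the unique edge of $X\cap Y$ if nonempty, else $0$. The double graph $\widehat E$ adds edges $e^*$ with $s(e^* )=r(e)$, $r(e^* )=s(e)$, and $K(\widehat E)$ is its path algebra. The Cohn–Leavitt path algebra $\mathcal A_K(\dot E)$ is the quotient of $K(\widehat E)$ by: for all $X,X'\in S$, $\sum_{Y\in D}(XY)(YX')^*=\delta_{X,X'}s(X)$; for all $Y,Y'\in T$, $\sum_{X\in C}(YX)^*(XY')=\delta_{Y,Y'}r(Y)$ (with $0^*=0$). *)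

theory Defs
  imports Main
begin

text \<open>An element of the free K-algebra on an alphabet of generators is a finitely
supported function from words (lists of generators) to K.\<close>

definition fa_zero :: "'g list \<Rightarrow> 'k::field" where
  "fa_zero = (\<lambda>w. 0)"

definition fa_add :: "('g list \<Rightarrow> 'k::field) \<Rightarrow> ('g list \<Rightarrow> 'k) \<Rightarrow> ('g list \<Rightarrow> 'k)" where
  "fa_add p q = (\<lambda>w. p w + q w)"

definition fa_diff :: "('g list \<Rightarrow> 'k::field) \<Rightarrow> ('g list \<Rightarrow> 'k) \<Rightarrow> ('g list \<Rightarrow> 'k)" where
  "fa_diff p q = (\<lambda>w. p w - q w)"

definition fa_smult :: "'k::field \<Rightarrow> ('g list \<Rightarrow> 'k) \<Rightarrow> ('g list \<Rightarrow> 'k)" where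
  "fa_smult c p = (\<lambda>w. c * p w)"

definition fa_mult :: "('g list \<Rightarrow> 'k::field) \<Rightarrow> ('g list \<Rightarrow> 'k) \<Rightarrow> ('g list \<Rightarrow> 'k)" where
  "fa_mult p q = (\<lambda>w. \<Sum>i\<le>length w. p (take i w) * q (drop i w))"

definition fa_sum :: "('a \<Rightarrow> 'g list \<Rightarrow> 'k::field) \<Rightarrow> 'a set \<Rightarrow> ('g list \<Rightarrow> 'k)" where
  "fa_sum F A = (\<lambda>w. \<Sum>a\<in>A. F a w)"

definition fa_mono :: "'g list \<Rightarrow> ('g list \<Rightarrow> 'k::field)" where
  "fa_mono u = (\<lambda>w. if w = u then 1 else 0)"

definition fa_gen :: "'g \<Rightarrow> ('g list \<Rightarrow> 'k::field)" where
  "fa_gen x = fa_mono [x]"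

definition fa_elem :: "'g set \<Rightarrow> ('g list \<Rightarrow> 'k::field) \<Rightarrow> bool" where
  "fa_elem A p \<longleftrightarrow> finite {w. p w \<noteq> 0} \<and> (\<forall>w. p w \<noteq> 0 \<longrightarrow> w \<in> lists A)"

inductive_set fa_ideal :: "'g set \<Rightarrow> ('g list \<Rightarrow> 'k::field) set \<Rightarrow> ('g list \<Rightarrow> 'k) set"
  for A :: "'g set" and R :: "('g list \<Rightarrow> 'k) set" where
  zero: "fa_zero \<in> fa_ideal A R"
| gen: "r \<in> R \<Longrightarrow> u \<in> lists A \<Longrightarrow> w \<in> lists A \<Longrightarrow>
          fa_mult (fa_mult (fa_mono u) r) (fa_mono w) \<in> fa_ideal A R"
| add: "x \<in> fa_ideal A R \<Longrightarrow> y \<in> fa_ideal A R \<Longrightarrow> fa_add x y \<in> fa_ideal A R"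
| smult: "x \<in> fa_ideal A R \<Longrightarrow> fa_smult c x \<in> fa_ideal A R"

section \<open>Generators: vertices, edges, ghost edges e*\<close>

datatype ('v, 'e) gen = V 'v | Ed 'e | Gh 'e

definition is_graph :: "'v set \<Rightarrow> 'e set \<Rightarrow> ('e \<Rightarrow> 'v) \<Rightarrow> ('e \<Rightarrow> 'v) \<Rightarrow> bool" where
  "is_graph E0 E1 r s \<longleftrightarrow> (\<forall>e\<in>E1. r e \<in> E0 \<and> s e \<in> E0)"

definition path_alph :: "'v set \<Rightarrow> 'e set \<Rightarrow> ('v, 'e) gen set" where
  "path_alph E0 E1 = V ` E0 \<union> Ed ` E1"

definition dbl_alph :: "'v set \<Rightarrow> 'e set \<Rightarrow> ('v, 'e) gen set" where
  "dbl_alph E0 E1 = V ` E0 \<union> Ed ` E1 \<union> Gh ` E1"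

definition path_rels :: "'v set \<Rightarrow> 'e set \<Rightarrow> ('e \<Rightarrow> 'v) \<Rightarrow> ('e \<Rightarrow> 'v)
    \<Rightarrow> (('v, 'e) gen list \<Rightarrow> 'k::field) set" where
  "path_rels E0 E1 r s =
     {fa_diff (fa_mult (fa_gen (V v)) (fa_gen (V w))) (if v = w then fa_gen (V v) else fa_zero)
        | v w. v \<in> E0 \<and> w \<in> E0}
   \<union> {fa_diff (fa_mult (fa_gen (V (s e))) (fa_gen (Ed e))) (fa_gen (Ed e)) | e. e \<in> E1}
   \<union> {fa_diff (fa_mult (fa_gen (Ed e)) (fa_gen (V (r e)))) (fa_gen (Ed e)) | e. e \<in> E1}"

text \<open>Additional relations for the ghost edges of the double graph:
  s(e*) = r(e), r(e*) = s(e).\<close>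
definition ghost_rels :: "'v set \<Rightarrow> 'e set \<Rightarrow> ('e \<Rightarrow> 'v) \<Rightarrow> ('e \<Rightarrow> 'v)
    \<Rightarrow> (('v, 'e) gen list \<Rightarrow> 'k::field) set" where
  "ghost_rels E0 E1 r s =
     {fa_diff (fa_mult (fa_gen (V (r e))) (fa_gen (Gh e))) (fa_gen (Gh e)) | e. e \<in> E1}
   \<union> {fa_diff (fa_mult (fa_gen (Gh e)) (fa_gen (V (s e)))) (fa_gen (Gh e)) | e. e \<in> E1}"

definition is_partition :: "'a set set \<Rightarrow> 'a set \<Rightarrow> bool" where
  "is_partition P A \<longleftrightarrow> (\<forall>X\<in>P. X \<noteq> {}) \<and> \<Union>P = A \<and> (\<forall>X\<in>P. \<forall>Y\<in>P. X \<noteq> Y \<longrightarrow> X \<inter> Y = {})"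

definition non_sinks :: "'v set \<Rightarrow> 'e set \<Rightarrow> ('e \<Rightarrow> 'v) \<Rightarrow> 'v set" where
  "non_sinks E0 E1 s = {v \<in> E0. \<exists>e\<in>E1. s e = v}"

definition non_sources :: "'v set \<Rightarrow> 'e set \<Rightarrow> ('e \<Rightarrow> 'v) \<Rightarrow> 'v set" where
  "non_sources E0 E1 r = {v \<in> E0. \<exists>e\<in>E1. r e = v}"

definition bisep_C :: "'v set \<Rightarrow> 'e set \<Rightarrow> ('e \<Rightarrow> 'v) \<Rightarrow> ('v \<Rightarrow> 'e set set) \<Rightarrow> 'e set set" where
  "bisep_C E0 E1 s Cv = (\<Union>v\<in>non_sinks E0 E1 s. Cv v)"

definition bisep_D :: "'v set \<Rightarrow> 'e set \<Rightarrow> ('e \<Rightarrow> 'v) \<Rightarrow> ('v \<Rightarrow> 'e set set) \<Rightarrow> 'e set set" where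
  "bisep_D E0 E1 r Dv = (\<Union>v\<in>non_sources E0 E1 r. Dv v)"

definition is_bisep :: "'v set \<Rightarrow> 'e set \<Rightarrow> ('e \<Rightarrow> 'v) \<Rightarrow> ('e \<Rightarrow> 'v)
    \<Rightarrow> ('v \<Rightarrow> 'e set set) \<Rightarrow> ('v \<Rightarrow> 'e set set) \<Rightarrow> 'e set set \<Rightarrow> 'e set set \<Rightarrow> bool" where
  "is_bisep E0 E1 r s Cv Dv S T \<longleftrightarrow>
     is_graph E0 E1 r s
   \<and> (\<forall>v\<in>non_sinks E0 E1 s. is_partition (Cv v) {e \<in> E1. s e = v})
   \<and> (\<forall>v\<in>non_sources E0 E1 r. is_partition (Dv v) {e \<in> E1. r e = v})
   \<and> (\<forall>X\<in>bisep_C E0 E1 s Cv. \<forall>Y\<in>bisep_D E0 E1 r Dv.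
        \<forall>e f. e \<in> X \<inter> Y \<longrightarrow> f \<in> X \<inter> Y \<longrightarrow> e = f)
   \<and> S \<subseteq> {X \<in> bisep_C E0 E1 s Cv. finite X}
   \<and> T \<subseteq> {Y \<in> bisep_D E0 E1 r Dv. finite Y}"

text \<open>XY = YX: the unique edge in X \<inter> Y (as element of the free algebra), or 0.
  ghost X Y is (XY)^*, with 0^* = 0.\<close>
definition edge_XY :: "'e set \<Rightarrow> 'e set \<Rightarrow> (('v, 'e) gen list \<Rightarrow> 'k::field)" where
  "edge_XY X Y = (if X \<inter> Y = {} then fa_zero else fa_gen (Ed (the_elem (X \<inter> Y))))"

definition ghost_XY :: "'e set \<Rightarrow> 'e set \<Rightarrow> (('v, 'e) gen list \<Rightarrow> 'k::field)" where
  "ghost_XY X Y = (if X \<inter> Y = {} then fa_zero else fa_gen (Gh (the_elem (X \<inter> Y))))"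

definition src_set :: "('e \<Rightarrow> 'v) \<Rightarrow> 'e set \<Rightarrow> 'v" where
  "src_set s X = s (SOME e. e \<in> X)"

definition rng_set :: "('e \<Rightarrow> 'v) \<Rightarrow> 'e set \<Rightarrow> 'v" where
  "rng_set r Y = r (SOME e. e \<in> Y)"

text \<open>The sums over Y in D (resp. X in C) are restricted to the
  terms that can be nonzero, i.e. Y meeting X (resp. X meeting Y); these index sets are
  finite since X \<in> S (resp. Y \<in> T) is finite.\<close>
definition CL_rels :: "'v set \<Rightarrow> 'e set \<Rightarrow> ('e \<Rightarrow> 'v) \<Rightarrow> ('e \<Rightarrow> 'v)
    \<Rightarrow> ('v \<Rightarrow> 'e set set) \<Rightarrow> ('v \<Rightarrow> 'e set set) \<Rightarrow> 'e set set \<Rightarrow> 'e set set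
    \<Rightarrow> (('v, 'e) gen list \<Rightarrow> 'k::field) set" where
  "CL_rels E0 E1 r s Cv Dv S T =
     {fa_diff
        (fa_sum (\<lambda>Y. fa_mult (edge_XY X Y) (ghost_XY Y X')) {Y \<in> bisep_D E0 E1 r Dv. X \<inter> Y \<noteq> {}})
        (if X = X' then fa_gen (V (src_set s X)) else fa_zero)
      | X X'. X \<in> S \<and> X' \<in> S}
   \<union> {fa_diff
        (fa_sum (\<lambda>X. fa_mult (ghost_XY Y X) (edge_XY X Y')) {X \<in> bisep_C E0 E1 s Cv. Y \<inter> X \<noteq> {}})
        (if Y = Y' then fa_gen (V (rng_set r Y)) else fa_zero)
      | Y Y'. Y \<in> T \<and> Y' \<in> T}"

end

theory Submission
  imports Defs
begin

text \<open>The map is injective because the Cohn--Leavitt algebra has a representation on which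
  \<open>K(E)\<close> acts faithfully.  Its basis consists of points: paths with a cursor, decorated by a stack
  of excursions off the path.  Vertices act as projections, an edge and its ghost as mutually
  inverse partial injections, and the Cohn--Leavitt relations hold because at every point exactly
  one edge of each class in \<open>S\<close> (resp. \<open>T\<close>) can act by its ghost (resp. by itself).  Modulo the
  relations of \<open>K(E)\<close> every element is a combination of normal words -- the empty word, vertices
  and nonempty paths -- and a nonzero such combination acts nontrivially: the empty word is seen
  at an invalid point, a vertex \<open>v\<close> at the trivial path at \<open>v\<close>, and a path \<open>\<beta>\<close> by moving the
  cursor from the end of \<open>\<beta>\<close> back to its start.\<close>

section \<open>Monomial multiples and ideals in the free algebra\<close>

lemma fa_mult_mono_left:
  "fa_mult (fa_mono u) q = (\<lambda>z. if take (length u) z = u then q (drop (length u) z) else 0)"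
proof
  fix z :: "'a list"
  show "fa_mult (fa_mono u) q z = (if take (length u) z = u then q (drop (length u) z) else 0)"
  proof (cases "take (length u) z = u")
    case True
    then have "length u \<le> length z" by (metis length_take min.absorb_iff1 min.commute nat_le_linear)
    moreover have "fa_mono u (take i z) * q (drop i z) = (if i = length u then q (drop (length u) z) else 0)"
      if "i \<le> length z" for i
      using True that by (auto simp: fa_mono_def)
    ultimately have "fa_mult (fa_mono u) q z = (\<Sum>i\<le>length z. if i = length u then q (drop (length u) z) else 0)"
      unfolding fa_mult_def by (intro sum.cong) auto
    with True \<open>length u \<le> length z\<close> show ?thesis by simp
  next
    case False
    then have "fa_mult (fa_mono u) q z = 0"
      unfolding fa_mult_def by (intro sum.neutral) (auto simp: fa_mono_def)
    then show ?thesis using False by simp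
  qed
qed

lemma fa_mult_mono_right:
  "fa_mult q (fa_mono w) = (\<lambda>z. if length w \<le> length z \<and> drop (length z - length w) z = w
                                 then q (take (length z - length w) z) else 0)"
proof
  fix z :: "'a list"
  show "fa_mult q (fa_mono w) z = (if length w \<le> length z \<and> drop (length z - length w) z = w
                                 then q (take (length z - length w) z) else 0)"
  proof (cases "length w \<le> length z \<and> drop (length z - length w) z = w")
    case True
    then have "q (take i z) * fa_mono w (drop i z) =
        (if i = length z - length w then q (take (length z - length w) z) else 0)" if "i \<le> length z" for i
      using that by (auto simp: fa_mono_def)
    then have "fa_mult q (fa_mono w) z = (\<Sum>i\<le>length z. if i = length z - length w then q (take (length z - length w) z) else 0)"
      unfolding fa_mult_def by (intro sum.cong) auto
    with True show ?thesis by simp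
  next
    case False
    then have "fa_mult q (fa_mono w) z = 0"
      unfolding fa_mult_def by (intro sum.neutral) (auto simp: fa_mono_def)
    then show ?thesis by (simp only: if_not_P[OF False])
  qed
qed

lemma fa_mult_unit_right: "fa_mult q (fa_mono []) = q"
  by (simp add: fa_mult_mono_right)

definition fa_sandwich :: "'g list \<Rightarrow> ('g list \<Rightarrow> 'k::field) \<Rightarrow> 'g list \<Rightarrow> 'g list \<Rightarrow> 'k" where
  "fa_sandwich u q w = fa_mult (fa_mult (fa_mono u) q) (fa_mono w)"

lemma fa_sandwich_at [simp]: "fa_sandwich u q w (u @ y @ w) = q y"
  by (simp add: fa_sandwich_def fa_mult_mono_left fa_mult_mono_right)

lemma fa_sandwich_outside:
  assumes "\<forall>y. z \<noteq> u @ y @ w"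
  shows "fa_sandwich u q w z = 0"
proof -
  have False if "length w \<le> length z" "drop (length z - length w) z = w"
      "take (length u) (take (length z - length w) z) = u"
  proof -
    let ?z' = "take (length z - length w) z"
    have "z = ?z' @ w" using that by (metis append_take_drop_id)
    moreover have "?z' = u @ drop (length u) ?z'" using that(3) by (metis append_take_drop_id)
    ultimately show False using assms by (metis append.assoc)
  qed
  then show ?thesis by (auto simp: fa_sandwich_def fa_mult_mono_left fa_mult_mono_right)
qed

lemma fa_sandwich_eqI:
  assumes "\<And>y. f (u @ y @ w) = g (u @ y @ w)" and "\<And>z. \<forall>y. z \<noteq> u @ y @ w \<Longrightarrow> f z = g z"
  shows "f = g"
proof
  fix z show "f z = g z"
    using assms by (cases "\<exists>y. z = u @ y @ w") auto
qed

lemma fa_sandwich_sandwich: "fa_sandwich u (fa_sandwich u' q w') w = fa_sandwich (u @ u') q (w' @ w)"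
proof (rule fa_sandwich_eqI[of _ u w])
  fix y
  show "fa_sandwich u (fa_sandwich u' q w') w (u @ y @ w) = fa_sandwich (u @ u') q (w' @ w) (u @ y @ w)"
  proof (cases "\<exists>x. y = u' @ x @ w'")
    case True
    then obtain x where "y = u' @ x @ w'" by blast
    moreover have "fa_sandwich u (fa_sandwich u' q w') w (u @ (u' @ x @ w') @ w) = q x"
      and "fa_sandwich (u @ u') q (w' @ w) ((u @ u') @ x @ w' @ w) = q x"
      by (simp_all only: fa_sandwich_at)
    ultimately show ?thesis by simp
  next
    case False
    then have "\<forall>x. u @ y @ w \<noteq> (u @ u') @ x @ w' @ w" by auto
    with False show ?thesis by (simp add: fa_sandwich_outside)
  qed
next
  fix z assume "\<forall>y. z \<noteq> u @ y @ w"
  moreover from this have "\<forall>x. z \<noteq> (u @ u') @ x @ w' @ w" by (metis append.assoc)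
  ultimately show "fa_sandwich u (fa_sandwich u' q w') w z = fa_sandwich (u @ u') q (w' @ w) z"
    by (simp add: fa_sandwich_outside)
qed

lemma fa_sandwich_linear:
  "fa_sandwich u (fa_add a b) w = fa_add (fa_sandwich u a w) (fa_sandwich u b w)"
  "fa_sandwich u (fa_smult c a) w = fa_smult c (fa_sandwich u a w)"
  "fa_sandwich u (fa_diff a b) w = fa_diff (fa_sandwich u a w) (fa_sandwich u b w)"
  "fa_sandwich u fa_zero w = fa_zero"
  "fa_sandwich u (fa_mono x) w = fa_mono (u @ x @ w)"
  by (rule fa_sandwich_eqI[of _ u w];
      auto simp: fa_sandwich_outside fa_add_def fa_smult_def fa_diff_def fa_zero_def fa_mono_def)+

lemma fa_mono_mult: "fa_mult (fa_mono a) (fa_mono b) = fa_mono (a @ b)"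
  using fa_sandwich_linear(5)[of a b "[]"] by (simp add: fa_sandwich_def fa_mult_unit_right)

lemma fa_mult_zero_left: "fa_mult fa_zero q = fa_zero"
  by (simp add: fa_mult_def fa_zero_def)

lemma fa_mult_zero_right: "fa_mult q fa_zero = fa_zero"
  by (simp add: fa_mult_def fa_zero_def)

lemma fa_ideal_sandwich:
  assumes "x \<in> fa_ideal A R" "u \<in> lists A" "w \<in> lists A"
  shows "fa_sandwich u x w \<in> fa_ideal A R"
  using assms
proof (induction x rule: fa_ideal.induct)
  case (gen r u' w')
  then have "fa_sandwich (u @ u') r (w' @ w) \<in> fa_ideal A R"
    unfolding fa_sandwich_def by (intro fa_ideal.gen) auto
  then show ?case by (simp add: fa_sandwich_def[symmetric] fa_sandwich_sandwich)
qed (simp_all add: fa_sandwich_linear fa_ideal.intros)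

lemma fa_ideal_sum:
  assumes "finite B" "\<And>a. a \<in> B \<Longrightarrow> F a \<in> fa_ideal A R"
  shows "fa_sum F B \<in> fa_ideal A R"
  using assms
proof (induction B rule: finite_induct)
  case empty
  have "fa_sum F {} = fa_zero" by (simp add: fa_sum_def fa_zero_def)
  then show ?case by (simp add: fa_ideal.zero)
next
  case (insert a B)
  have "fa_sum F (insert a B) = fa_add (F a) (fa_sum F B)" using insert by (auto simp: fa_sum_def fa_add_def)
  then show ?case using insert by (simp add: fa_ideal.add)
qed

lemma fa_ideal_mono:
  assumes "x \<in> fa_ideal A R" "A \<subseteq> A'" "R \<subseteq> R'"
  shows "x \<in> fa_ideal A' R'"
  using assms
proof induction
  case (gen r u w)
  then show ?case using lists_mono by (blast intro: fa_ideal.gen)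
qed (auto intro: fa_ideal.intros)

definition fa_cong :: "'g set \<Rightarrow> ('g list \<Rightarrow> 'k::field) set \<Rightarrow> ('g list \<Rightarrow> 'k) \<Rightarrow> ('g list \<Rightarrow> 'k) \<Rightarrow> bool" where
  "fa_cong A R a b \<longleftrightarrow> fa_diff a b \<in> fa_ideal A R"

lemma fa_cong_refl: "fa_cong A R a a"
proof -
  have "fa_diff a a = fa_zero" by (auto simp: fa_diff_def fa_zero_def)
  then show ?thesis by (simp add: fa_cong_def fa_ideal.zero)
qed

lemma fa_cong_sym: "fa_cong A R a b \<Longrightarrow> fa_cong A R b a"
proof -
  assume "fa_cong A R a b"
  then have "fa_smult (-1) (fa_diff a b) \<in> fa_ideal A R" by (simp add: fa_cong_def fa_ideal.smult)
  moreover have "fa_smult (-1) (fa_diff a b) = fa_diff b a" by (auto simp: fa_smult_def fa_diff_def)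
  ultimately show ?thesis by (simp add: fa_cong_def)
qed

lemma fa_cong_trans [trans]: "fa_cong A R a b \<Longrightarrow> fa_cong A R b c \<Longrightarrow> fa_cong A R a c"
proof -
  assume "fa_cong A R a b" "fa_cong A R b c"
  then have "fa_add (fa_diff a b) (fa_diff b c) \<in> fa_ideal A R" by (simp add: fa_cong_def fa_ideal.add)
  moreover have "fa_add (fa_diff a b) (fa_diff b c) = fa_diff a c" by (auto simp: fa_add_def fa_diff_def)
  ultimately show ?thesis by (simp add: fa_cong_def)
qed

lemma fa_cong_sandwich:
  "fa_cong A R a b \<Longrightarrow> u \<in> lists A \<Longrightarrow> w \<in> lists A \<Longrightarrow>
     fa_cong A R (fa_sandwich u a w) (fa_sandwich u b w)"
  unfolding fa_cong_def by (metis fa_ideal_sandwich fa_sandwich_linear(3))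

lemma fa_cong_relator:
  "fa_diff (fa_mono x) (fa_mono y) \<in> R \<Longrightarrow> u \<in> lists A \<Longrightarrow> w \<in> lists A \<Longrightarrow>
     fa_cong A R (fa_mono (u @ x @ w)) (fa_mono (u @ y @ w))"
  unfolding fa_cong_def by (metis fa_ideal.gen fa_sandwich_def fa_sandwich_linear(3,5))

lemma fa_cong_relator_zero:
  "fa_diff (fa_mono x) fa_zero \<in> R \<Longrightarrow> u \<in> lists A \<Longrightarrow> w \<in> lists A \<Longrightarrow>
     fa_cong A R (fa_mono (u @ x @ w)) fa_zero"
  unfolding fa_cong_def by (metis fa_ideal.gen fa_sandwich_def fa_sandwich_linear(3,4,5))


section \<open>Representations by partial actions\<close>

definition supp :: "('g list \<Rightarrow> 'k::field) \<Rightarrow> 'g list set" where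
  "supp f = {z. f z \<noteq> 0}"

fun word_act :: "('g \<Rightarrow> 'p \<Rightarrow> 'p option) \<Rightarrow> 'g list \<Rightarrow> 'p \<Rightarrow> 'p option" where
  "word_act act [] b = Some b"
| "word_act act (x # xs) b = Option.bind (word_act act xs b) (act x)"

text \<open>A word acts by letting its letters act from right to left, as on a left module; a
  partial action of the generators thus gives a representation of the free algebra on the
  vector space with basis the points, and \<open>act_coeff act f b c\<close> is the coefficient of \<open>c\<close> in
  \<open>f \<cdot> b\<close>.\<close>
definition act_coeff :: "('g \<Rightarrow> 'p \<Rightarrow> 'p option) \<Rightarrow> ('g list \<Rightarrow> 'k::field) \<Rightarrow> 'p \<Rightarrow> 'p \<Rightarrow> 'k" where
  "act_coeff act f b c = sum f {z. f z \<noteq> 0 \<and> word_act act z b = Some c}"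

definition annihilates :: "('g \<Rightarrow> 'p \<Rightarrow> 'p option) \<Rightarrow> ('g list \<Rightarrow> 'k::field) \<Rightarrow> bool" where
  "annihilates act f \<longleftrightarrow> finite (supp f) \<and> (\<forall>b c. act_coeff act f b c = 0)"

lemma word_act_append:
  "word_act act (xs @ ys) b = Option.bind (word_act act ys b) (word_act act xs)"
  by (induction xs) (auto simp: bind_assoc)

definition partial_inj :: "('p \<Rightarrow> 'p option) \<Rightarrow> bool" where
  "partial_inj f \<longleftrightarrow> (\<forall>b b' c. f b = Some c \<longrightarrow> f b' = Some c \<longrightarrow> b = b')"

lemma partial_inj_word_act:
  assumes "\<And>x. partial_inj (act x)"
  shows "partial_inj (word_act act u)"
proof (induction u)
  case (Cons x u)
  with assms show ?case
    unfolding partial_inj_def by (simp add: bind_eq_Some_conv) blast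
qed (simp add: partial_inj_def)

lemma act_coeff_eq_sum:
  assumes "finite F" "supp f \<subseteq> F"
  shows "act_coeff act f b c = sum f {z \<in> F. word_act act z b = Some c}"
  unfolding act_coeff_def
  by (rule sum.mono_neutral_left) (use assms in \<open>auto simp: supp_def\<close>)

lemma supp_fa_mono: "supp (fa_mono z :: _ \<Rightarrow> 'k::field) = {z}"
  by (auto simp: supp_def fa_mono_def)

lemma supp_fa_zero: "supp fa_zero = {}"
  by (simp add: supp_def fa_zero_def)

lemma supp_fa_diff: "supp (fa_diff f g) \<subseteq> supp f \<union> supp g"
  by (auto simp: supp_def fa_diff_def)

lemma supp_fa_add: "supp (fa_add f g) \<subseteq> supp f \<union> supp g"
  by (auto simp: supp_def fa_add_def)

lemma supp_fa_smult: "supp (fa_smult k f) \<subseteq> supp f"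
  by (auto simp: supp_def fa_smult_def)

lemma act_coeff_diff:
  assumes "finite (supp f)" "finite (supp g)"
  shows "act_coeff act (fa_diff f g) b c = act_coeff act f b c - act_coeff act g b c"
proof -
  let ?F = "supp f \<union> supp g" and ?Z = "\<lambda>F. {z \<in> F. word_act act z b = Some c}"
  have "act_coeff act (fa_diff f g) b c = sum (fa_diff f g) (?Z ?F)"
    using assms supp_fa_diff by (intro act_coeff_eq_sum) auto
  moreover have "act_coeff act f b c = sum f (?Z ?F)" "act_coeff act g b c = sum g (?Z ?F)"
    by (rule act_coeff_eq_sum; use assms in auto)+
  ultimately show ?thesis by (simp add: fa_diff_def sum_subtractf)
qed

lemma act_coeff_add:
  assumes "finite (supp f)" "finite (supp g)"
  shows "act_coeff act (fa_add f g) b c = act_coeff act f b c + act_coeff act g b c"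
proof -
  let ?F = "supp f \<union> supp g" and ?Z = "\<lambda>F. {z \<in> F. word_act act z b = Some c}"
  have "act_coeff act (fa_add f g) b c = sum (fa_add f g) (?Z ?F)"
    using assms supp_fa_add by (intro act_coeff_eq_sum) auto
  moreover have "act_coeff act f b c = sum f (?Z ?F)" "act_coeff act g b c = sum g (?Z ?F)"
    by (rule act_coeff_eq_sum; use assms in auto)+
  ultimately show ?thesis by (simp add: fa_add_def sum.distrib)
qed

lemma act_coeff_smult:
  assumes "finite (supp f)"
  shows "act_coeff act (fa_smult k f) b c = k * act_coeff act f b c"
proof -
  let ?Z = "{z \<in> supp f. word_act act z b = Some c}"
  have "act_coeff act (fa_smult k f) b c = sum (fa_smult k f) ?Z"
    using assms supp_fa_smult by (intro act_coeff_eq_sum)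
  moreover have "act_coeff act f b c = sum f ?Z"
    by (rule act_coeff_eq_sum; use assms in auto)+
  ultimately show ?thesis by (simp add: fa_smult_def sum_distrib_left)
qed

lemma act_coeff_zero: "act_coeff act fa_zero b c = 0"
  by (simp add: act_coeff_def fa_zero_def)

lemma act_coeff_mono:
  "act_coeff act (fa_mono z) b c = (if word_act act z b = Some c then 1 else (0::'k::field))"
proof -
  have "{w. (fa_mono z w :: 'k) \<noteq> 0 \<and> word_act act w b = Some c} =
      (if word_act act z b = Some c then {z} else {})"
    by (auto simp: fa_mono_def)
  then show ?thesis by (simp add: act_coeff_def fa_mono_def)
qed

lemma supp_fa_sum: "supp (fa_sum F B) \<subseteq> (\<Union>a\<in>B. supp (F a))"
  by (auto simp: supp_def fa_sum_def intro: sum.not_neutral_contains_not_neutral)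

lemma finite_supp_fa_sum:
  "finite B \<Longrightarrow> (\<And>a. a \<in> B \<Longrightarrow> finite (supp (F a))) \<Longrightarrow> finite (supp (fa_sum F B))"
  by (rule finite_subset[OF supp_fa_sum]) simp

lemma act_coeff_sum:
  assumes "finite B" "\<And>a. a \<in> B \<Longrightarrow> finite (supp (F a))"
  shows "act_coeff act (fa_sum F B) b c = (\<Sum>a\<in>B. act_coeff act (F a) b c)"
proof -
  let ?F = "\<Union>a\<in>B. supp (F a)"
  have fin: "finite ?F" using assms by auto
  have "act_coeff act (fa_sum F B) b c = (\<Sum>z\<in>{z \<in> ?F. word_act act z b = Some c}. \<Sum>a\<in>B. F a z)"
    using act_coeff_eq_sum[OF fin supp_fa_sum] by (simp add: fa_sum_def)
  also have "\<dots> = (\<Sum>a\<in>B. \<Sum>z\<in>{z \<in> ?F. word_act act z b = Some c}. F a z)"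
    by (rule sum.swap)
  also have "\<dots> = (\<Sum>a\<in>B. act_coeff act (F a) b c)"
    by (rule sum.cong[OF refl], rule act_coeff_eq_sum[OF fin, symmetric]) auto
  finally show ?thesis .
qed

lemma act_coeff_single:
  assumes "word_act act n b = Some c"
    and "\<And>z. f z \<noteq> 0 \<Longrightarrow> word_act act z b = Some c \<Longrightarrow> z = n"
  shows "act_coeff act f b c = f n"
proof -
  have "{z. f z \<noteq> 0 \<and> word_act act z b = Some c} \<subseteq> {n}"
    using assms(2) by blast
  then have "act_coeff act f b c = sum f {n}"
    unfolding act_coeff_def by (intro sum.mono_neutral_left) (use assms(1) in auto)
  then show ?thesis by simp
qed

lemma supp_fa_sandwich: "supp (fa_sandwich u q w) \<subseteq> (\<lambda>y. u @ y @ w) ` supp q"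
proof
  fix z assume z: "z \<in> supp (fa_sandwich u q w)"
  then have "fa_sandwich u q w z \<noteq> 0" by (simp add: supp_def)
  then obtain y where "z = u @ y @ w" using fa_sandwich_outside by blast
  with z show "z \<in> (\<lambda>y. u @ y @ w) ` supp q" by (auto simp: supp_def)
qed

lemma act_coeff_fa_sandwich:
  assumes "finite (supp q)"
  shows "act_coeff act (fa_sandwich u q w) b c = sum q {y \<in> supp q. word_act act (u @ y @ w) b = Some c}"
proof -
  let ?f = "\<lambda>y. u @ y @ w" and ?Y = "{y \<in> supp q. word_act act (u @ y @ w) b = Some c}"
  have Y: "{z \<in> ?f ` supp q. word_act act z b = Some c} = ?f ` ?Y" by auto
  have "act_coeff act (fa_sandwich u q w) b c = sum (fa_sandwich u q w) (?f ` ?Y)"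
    unfolding Y[symmetric] using assms by (intro act_coeff_eq_sum supp_fa_sandwich) simp
  also have "\<dots> = sum q ?Y"
    by (subst sum.reindex) (auto simp: inj_on_def)
  finally show ?thesis .
qed

lemma word_act_sandwich_iff:
  assumes "partial_inj (word_act act u)" "word_act act w b = Some b'" "word_act act u c' = Some c"
  shows "word_act act (u @ y @ w) b = Some c \<longleftrightarrow> word_act act y b' = Some c'"
proof
  assume "word_act act (u @ y @ w) b = Some c"
  then obtain d where d: "word_act act y b' = Some d" "word_act act u d = Some c"
    using assms(2) by (auto simp: word_act_append bind_eq_Some_conv)
  then have "d = c'" using assms(1,3) unfolding partial_inj_def by blast
  with d(1) show "word_act act y b' = Some c'" by simp
qed (use assms(2,3) in \<open>simp add: word_act_append\<close>)

lemma annihilates_sandwich: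
  assumes inj: "\<And>x. partial_inj (act x)" and "annihilates act q"
  shows "annihilates act (fa_sandwich u q w)"
proof -
  have fin: "finite (supp q)" and q0: "\<And>b c. act_coeff act q b c = 0"
    using assms(2) by (auto simp: annihilates_def)
  \<comment> \<open>The coefficient of \<open>u q w\<close> at \<open>(b, c)\<close> is that of \<open>q\<close> at \<open>(w \<cdot> b, c')\<close> with \<open>u \<cdot> c' = c\<close>.\<close>
  have "sum q {y \<in> supp q. word_act act (u @ y @ w) b = Some c} = 0" for b c
  proof (cases "\<exists>b' c'. word_act act w b = Some b' \<and> word_act act u c' = Some c")
    case True
    then obtain b' c' where b': "word_act act w b = Some b'" and c': "word_act act u c' = Some c" by blast
    have "partial_inj (word_act act u)" using inj by (rule partial_inj_word_act)
    then have "{y \<in> supp q. word_act act (u @ y @ w) b = Some c} = {y. q y \<noteq> 0 \<and> word_act act y b' = Some c'}"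
      using word_act_sandwich_iff[OF _ b' c'] by (auto simp: supp_def)
    then show ?thesis using q0[of b' c'] by (simp add: act_coeff_def)
  next
    case False
    then have "word_act act (u @ y @ w) b \<noteq> Some c" for y
      by (cases "word_act act w b") (auto simp: word_act_append bind_eq_Some_conv)
    then show ?thesis by simp
  qed
  moreover have "finite (supp (fa_sandwich u q w))"
    using fin finite_subset[OF supp_fa_sandwich] by blast
  ultimately show ?thesis by (simp add: annihilates_def act_coeff_fa_sandwich[OF fin])
qed

theorem annihilates_fa_ideal:
  assumes "x \<in> fa_ideal A R"
    and "\<And>x. partial_inj (act x)"
    and "\<And>q. q \<in> R \<Longrightarrow> annihilates act q"
  shows "annihilates act x"
  using assms(1)
proof (induction x rule: fa_ideal.induct)
  case zero
  show ?case by (simp add: annihilates_def act_coeff_zero supp_fa_zero)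
next
  case (gen q u w)
  then show ?case
    using annihilates_sandwich[OF assms(2) assms(3)] by (simp add: fa_sandwich_def)
next
  case (add x y)
  then show ?case
    using supp_fa_add[of x y] finite_subset by (simp add: annihilates_def act_coeff_add) blast
next
  case (smult x k)
  then show ?case
    using supp_fa_smult[of k x] finite_subset by (simp add: annihilates_def act_coeff_smult) blast
qed

lemma annihilates_fa_diff_of_coeffs:
  assumes "finite (supp f)" "finite (supp g)" "\<And>b c. act_coeff act f b c = act_coeff act g b c"
  shows "annihilates act (fa_diff f g)"
  using assms finite_subset[OF supp_fa_diff, of f g] by (simp add: annihilates_def act_coeff_diff)

lemma annihilates_diff:
  assumes "annihilates act f" "annihilates act g"
  shows "annihilates act (fa_diff f g)"
  using assms by (intro annihilates_fa_diff_of_coeffs) (simp_all add: annihilates_def)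

lemma annihilates_mono_diff:
  assumes "\<And>b. word_act act x b = word_act act y b"
  shows "annihilates act (fa_diff (fa_mono x) (fa_mono y))"
  using assms by (intro annihilates_fa_diff_of_coeffs) (simp_all add: act_coeff_mono supp_fa_mono)

lemma annihilates_mono_zero:
  assumes "\<And>b. word_act act x b = None"
  shows "annihilates act (fa_diff (fa_mono x) fa_zero)"
  using assms
  by (intro annihilates_fa_diff_of_coeffs) (simp_all add: act_coeff_mono act_coeff_zero supp_fa_mono supp_fa_zero)

section \<open>Bi-separated graphs\<close>

lemma is_partitionD:
  assumes "is_partition P A" "X \<in> P"
  shows "X \<noteq> {}" "X \<subseteq> A" "\<And>Y. Y \<in> P \<Longrightarrow> X \<noteq> Y \<Longrightarrow> X \<inter> Y = {}"
  using assms unfolding is_partition_def by blast+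

lemma is_partition_cover: "is_partition P A \<Longrightarrow> x \<in> A \<Longrightarrow> \<exists>X\<in>P. x \<in> X"
  unfolding is_partition_def by blast

locale bisep =
  fixes E0 :: "'v set" and E1 :: "'e set" and r s :: "'e \<Rightarrow> 'v"
    and Cv Dv :: "'v \<Rightarrow> 'e set set" and S T :: "'e set set"
  assumes bisep: "is_bisep E0 E1 r s Cv Dv S T"
begin

abbreviation "CC \<equiv> bisep_C E0 E1 s Cv"
abbreviation "DD \<equiv> bisep_D E0 E1 r Dv"

lemma edge_ends: "e \<in> E1 \<Longrightarrow> r e \<in> E0 \<and> s e \<in> E0"
  using bisep unfolding is_bisep_def is_graph_def by blast

lemma C_classE:
  assumes "X \<in> CC"
  obtains v where "X \<in> Cv v" "X \<noteq> {}" "X \<subseteq> {e \<in> E1. s e = v}" "is_partition (Cv v) {e \<in> E1. s e = v}"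
proof -
  obtain v where v: "v \<in> non_sinks E0 E1 s" "X \<in> Cv v" using assms unfolding bisep_C_def by blast
  then have "is_partition (Cv v) {e \<in> E1. s e = v}" using bisep unfolding is_bisep_def by simp
  with v is_partitionD[OF this v(2)] that show ?thesis by blast
qed

lemma D_classE:
  assumes "Y \<in> DD"
  obtains v where "Y \<in> Dv v" "Y \<noteq> {}" "Y \<subseteq> {e \<in> E1. r e = v}" "is_partition (Dv v) {e \<in> E1. r e = v}"
proof -
  obtain v where v: "v \<in> non_sources E0 E1 r" "Y \<in> Dv v" using assms unfolding bisep_D_def by blast
  then have "is_partition (Dv v) {e \<in> E1. r e = v}" using bisep unfolding is_bisep_def by simp
  with v is_partitionD[OF this v(2)] that show ?thesis by blast
qed

lemma C_class_props:
  assumes "X \<in> CC"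
  shows "X \<noteq> {}" "X \<subseteq> E1" "\<And>e. e \<in> X \<Longrightarrow> s e = src_set s X"
proof -
  obtain v where v: "X \<noteq> {}" "X \<subseteq> {e \<in> E1. s e = v}" using C_classE[OF assms] by blast
  moreover from v have "src_set s X = v" unfolding src_set_def by (metis (mono_tags) CollectD some_in_eq subsetD)
  ultimately show "X \<noteq> {}" "X \<subseteq> E1" "\<And>e. e \<in> X \<Longrightarrow> s e = src_set s X" by auto
qed

lemma D_class_props:
  assumes "Y \<in> DD"
  shows "Y \<noteq> {}" "Y \<subseteq> E1" "\<And>e. e \<in> Y \<Longrightarrow> r e = rng_set r Y"
proof -
  obtain v where v: "Y \<noteq> {}" "Y \<subseteq> {e \<in> E1. r e = v}" using D_classE[OF assms] by blast
  moreover from v have "rng_set r Y = v" unfolding rng_set_def by (metis (mono_tags) CollectD some_in_eq subsetD)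
  ultimately show "Y \<noteq> {}" "Y \<subseteq> E1" "\<And>e. e \<in> Y \<Longrightarrow> r e = rng_set r Y" by auto
qed

lemma C_class_unique:
  assumes "X \<in> CC" "X' \<in> CC" "e \<in> X" "e \<in> X'"
  shows "X = X'"
proof -
  obtain v where v: "X \<in> Cv v" "X \<subseteq> {e \<in> E1. s e = v}" "is_partition (Cv v) {e \<in> E1. s e = v}"
    using C_classE[OF assms(1)] by blast
  obtain w where w: "X' \<in> Cv w" "X' \<subseteq> {e \<in> E1. s e = w}" using C_classE[OF assms(2)] by blast
  have "v = w" using v w assms by auto
  with w have "X' \<in> Cv v" by simp
  then show ?thesis using is_partitionD(3)[OF v(3) v(1)] assms(3,4) by blast
qed

lemma D_class_unique:
  assumes "Y \<in> DD" "Y' \<in> DD" "e \<in> Y" "e \<in> Y'"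
  shows "Y = Y'"
proof -
  obtain v where v: "Y \<in> Dv v" "Y \<subseteq> {e \<in> E1. r e = v}" "is_partition (Dv v) {e \<in> E1. r e = v}"
    using D_classE[OF assms(1)] by blast
  obtain w where w: "Y' \<in> Dv w" "Y' \<subseteq> {e \<in> E1. r e = w}" using D_classE[OF assms(2)] by blast
  have "v = w" using v w assms by auto
  with w have "Y' \<in> Dv v" by simp
  then show ?thesis using is_partitionD(3)[OF v(3) v(1)] assms(3,4) by blast
qed

lemma C_D_inter:
  assumes "X \<in> CC" "Y \<in> DD" "e \<in> X" "e \<in> Y"
  shows "X \<inter> Y = {e}"
  using bisep assms unfolding is_bisep_def by blast

lemma edge_in_C_class:
  assumes "e \<in> E1"
  shows "\<exists>X\<in>CC. e \<in> X"
proof -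
  have v: "s e \<in> non_sinks E0 E1 s" using assms edge_ends unfolding non_sinks_def by blast
  then have "is_partition (Cv (s e)) {f \<in> E1. s f = s e}" using bisep unfolding is_bisep_def by simp
  then have "\<exists>X\<in>Cv (s e). e \<in> X" using assms is_partition_cover by fastforce
  with v show ?thesis unfolding bisep_C_def by blast
qed

lemma edge_in_D_class:
  assumes "e \<in> E1"
  shows "\<exists>Y\<in>DD. e \<in> Y"
proof -
  have v: "r e \<in> non_sources E0 E1 r" using assms edge_ends unfolding non_sources_def by blast
  then have "is_partition (Dv (r e)) {f \<in> E1. r f = r e}" using bisep unfolding is_bisep_def by simp
  then have "\<exists>Y\<in>Dv (r e). e \<in> Y" using assms is_partition_cover by fastforce
  with v show ?thesis unfolding bisep_D_def by blast
qed

lemma S_classD: "X \<in> S \<Longrightarrow> X \<in> CC \<and> finite X"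
  using bisep unfolding is_bisep_def by blast

lemma T_classD: "Y \<in> T \<Longrightarrow> Y \<in> DD \<and> finite Y"
  using bisep unfolding is_bisep_def by blast

lemma bij_betw_D_classes_meeting:
  assumes "X \<in> CC"
  shows "bij_betw (\<lambda>Y. the_elem (X \<inter> Y)) {Y \<in> DD. X \<inter> Y \<noteq> {}} X"
proof (rule bij_betw_imageI)
  show "inj_on (\<lambda>Y. the_elem (X \<inter> Y)) {Y \<in> DD. X \<inter> Y \<noteq> {}}"
  proof (rule inj_onI)
    fix Y1 Y2 assume Y: "Y1 \<in> {Y \<in> DD. X \<inter> Y \<noteq> {}}" "Y2 \<in> {Y \<in> DD. X \<inter> Y \<noteq> {}}"
      and eq: "the_elem (X \<inter> Y1) = the_elem (X \<inter> Y2)"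
    from Y obtain e1 e2 where e: "e1 \<in> X" "e1 \<in> Y1" "e2 \<in> X" "e2 \<in> Y2" by blast
    with Y have "X \<inter> Y1 = {e1}" "X \<inter> Y2 = {e2}"
      using C_D_inter[OF assms] by auto
    with eq e Y show "Y1 = Y2" using D_class_unique by auto
  qed
  show "(\<lambda>Y. the_elem (X \<inter> Y)) ` {Y \<in> DD. X \<inter> Y \<noteq> {}} = X"
  proof safe
    fix e assume "e \<in> X"
    then obtain Y where "Y \<in> DD" "e \<in> Y" using edge_in_D_class C_class_props(2)[OF assms] by blast
    with \<open>e \<in> X\<close> assms show "e \<in> (\<lambda>Y. the_elem (X \<inter> Y)) ` {Y \<in> DD. X \<inter> Y \<noteq> {}}"
      by (intro image_eqI[of _ _ Y]) (auto simp: C_D_inter)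
  qed (use C_D_inter assms in fastforce)
qed

lemma bij_betw_C_classes_meeting:
  assumes "Y \<in> DD"
  shows "bij_betw (\<lambda>X. the_elem (Y \<inter> X)) {X \<in> CC. Y \<inter> X \<noteq> {}} Y"
proof (rule bij_betw_imageI)
  show "inj_on (\<lambda>X. the_elem (Y \<inter> X)) {X \<in> CC. Y \<inter> X \<noteq> {}}"
  proof (rule inj_onI)
    fix X1 X2 assume X: "X1 \<in> {X \<in> CC. Y \<inter> X \<noteq> {}}" "X2 \<in> {X \<in> CC. Y \<inter> X \<noteq> {}}"
      and eq: "the_elem (Y \<inter> X1) = the_elem (Y \<inter> X2)"
    from X obtain e1 e2 where e: "e1 \<in> Y" "e1 \<in> X1" "e2 \<in> Y" "e2 \<in> X2" by blast
    with X have "X1 \<inter> Y = {e1}" "X2 \<inter> Y = {e2}"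
      using C_D_inter[OF _ assms] by auto
    with eq e X show "X1 = X2" using C_class_unique by (auto simp: Int_commute)
  qed
  show "(\<lambda>X. the_elem (Y \<inter> X)) ` {X \<in> CC. Y \<inter> X \<noteq> {}} = Y"
  proof safe
    fix e assume "e \<in> Y"
    then obtain X where "X \<in> CC" "e \<in> X" using edge_in_C_class D_class_props(2)[OF assms] by blast
    with \<open>e \<in> Y\<close> assms show "e \<in> (\<lambda>X. the_elem (Y \<inter> X)) ` {X \<in> CC. Y \<inter> X \<noteq> {}}"
      by (intro image_eqI[of _ _ X]) (auto simp: C_D_inter Int_commute)
  qed (use C_D_inter assms in \<open>fastforce simp: Int_commute\<close>)
qed

end

section \<open>A representation of the Cohn--Leavitt algebra\<close>

datatype 'e move = Up 'e | Dn 'e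
datatype ('v, 'e) point = Junk | Pt 'v "'e list" nat "'e move list"

context bisep
begin

definition is_path :: "'e list \<Rightarrow> bool" where
  "is_path \<beta> \<longleftrightarrow> set \<beta> \<subseteq> E1 \<and> (\<forall>i. Suc i < length \<beta> \<longrightarrow> r (\<beta>!i) = s (\<beta>!Suc i))"

text \<open>A point \<open>Pt v \<beta> j ms\<close> is a path \<open>\<beta>\<close> with a cursor in front of its \<open>j\<close>-th edge (the vertex
  \<open>v\<close> is only used when \<open>\<beta> = []\<close>), plus a stack \<open>ms\<close> of moves off the path.  An edge \<open>e\<close> moves the
  cursor back across \<open>e\<close>, or pops a ghost move \<open>Dn e\<close>; failing that, if \<open>e\<close> is the chosen
  representative of its class \<open>Y \<in> T\<close> it pushes \<open>Up e\<close>.  Ghost edges act dually.  Pushing only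
  representatives, and only when no edge of the class can pop, makes exactly one edge of each
  class in \<open>S\<close> (resp. \<open>T\<close>) act at each point, which is what the Cohn--Leavitt relations demand.\<close>

fun vtx :: "('v, 'e) point \<Rightarrow> 'v" where
  "vtx Junk = undefined"
| "vtx (Pt v \<beta> j []) = (if j < length \<beta> then s (\<beta>!j) else if \<beta> = [] then v else r (last \<beta>))"
| "vtx (Pt v \<beta> j (Up e # ms)) = s e"
| "vtx (Pt v \<beta> j (Dn e # ms)) = r e"

fun ghost_pops_in :: "('v, 'e) point \<Rightarrow> 'e set \<Rightarrow> bool" where
  "ghost_pops_in (Pt v \<beta> j []) X \<longleftrightarrow> j < length \<beta> \<and> \<beta>!j \<in> X"
| "ghost_pops_in (Pt v \<beta> j (Up f # ms)) X \<longleftrightarrow> f \<in> X"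
| "ghost_pops_in _ X \<longleftrightarrow> False"

fun edge_pops_in :: "('v, 'e) point \<Rightarrow> 'e set \<Rightarrow> bool" where
  "edge_pops_in (Pt v \<beta> j []) Y \<longleftrightarrow> 0 < j \<and> j \<le> length \<beta> \<and> \<beta>!(j-1) \<in> Y"
| "edge_pops_in (Pt v \<beta> j (Dn f # ms)) Y \<longleftrightarrow> f \<in> Y"
| "edge_pops_in _ Y \<longleftrightarrow> False"

definition edge_pushes :: "('v, 'e) point \<Rightarrow> 'e \<Rightarrow> bool" where
  "edge_pushes b e \<longleftrightarrow> e \<in> E1 \<and> r e = vtx b \<and> (\<exists>Y\<in>T. e \<in> Y \<and> e = (SOME f. f \<in> Y) \<and> \<not> edge_pops_in b Y)"

definition ghost_pushes :: "('v, 'e) point \<Rightarrow> 'e \<Rightarrow> bool" where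
  "ghost_pushes b e \<longleftrightarrow> e \<in> E1 \<and> s e = vtx b \<and> (\<exists>X\<in>S. e \<in> X \<and> e = (SOME f. f \<in> X) \<and> \<not> ghost_pops_in b X)"

fun push :: "'e move \<Rightarrow> ('v, 'e) point \<Rightarrow> ('v, 'e) point" where
  "push m (Pt v \<beta> j ms) = Pt v \<beta> j (m # ms)"
| "push m Junk = Junk"

fun valid :: "('v, 'e) point \<Rightarrow> bool" where
  "valid Junk \<longleftrightarrow> False"
| "valid (Pt v \<beta> j []) \<longleftrightarrow> j \<le> length \<beta> \<and> is_path \<beta>"
| "valid (Pt v \<beta> j (Up e # ms)) \<longleftrightarrow> valid (Pt v \<beta> j ms) \<and> edge_pushes (Pt v \<beta> j ms) e"
| "valid (Pt v \<beta> j (Dn e # ms)) \<longleftrightarrow> valid (Pt v \<beta> j ms) \<and> ghost_pushes (Pt v \<beta> j ms) e"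

fun edge_pop :: "('v, 'e) point \<Rightarrow> 'e \<Rightarrow> ('v, 'e) point option" where
  "edge_pop (Pt v \<beta> j (Dn f # ms)) e = (if f = e then Some (Pt v \<beta> j ms) else None)"
| "edge_pop (Pt v \<beta> j []) e =
     (if 0 < j \<and> j \<le> length \<beta> \<and> \<beta>!(j-1) = e then Some (Pt v \<beta> (j-1) []) else None)"
| "edge_pop _ e = None"

fun ghost_pop :: "('v, 'e) point \<Rightarrow> 'e \<Rightarrow> ('v, 'e) point option" where
  "ghost_pop (Pt v \<beta> j (Up f # ms)) e = (if f = e then Some (Pt v \<beta> j ms) else None)"
| "ghost_pop (Pt v \<beta> j []) e = (if j < length \<beta> \<and> \<beta>!j = e then Some (Pt v \<beta> (Suc j) []) else None)"
| "ghost_pop _ e = None"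

definition edge_act :: "'e \<Rightarrow> ('v, 'e) point \<Rightarrow> ('v, 'e) point option" where
  "edge_act e b = (if \<not> valid b then None else if edge_pushes b e then Some (push (Up e) b) else edge_pop b e)"

definition ghost_act :: "'e \<Rightarrow> ('v, 'e) point \<Rightarrow> ('v, 'e) point option" where
  "ghost_act e b = (if \<not> valid b then None else if ghost_pushes b e then Some (push (Dn e) b) else ghost_pop b e)"

lemma ghost_pushes_class:
  assumes "ghost_pushes b e" "X \<in> CC" "e \<in> X"
  shows "\<not> ghost_pops_in b X" "e = (SOME f. f \<in> X)"
proof -
  obtain X' where X': "X' \<in> S" "e \<in> X'" "e = (SOME f. f \<in> X')" "\<not> ghost_pops_in b X'"
    using assms(1) unfolding ghost_pushes_def by blast
  have "X' = X" using C_class_unique[OF _ assms(2) X'(2) assms(3)] S_classD[OF X'(1)] by blast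
  then show "\<not> ghost_pops_in b X" "e = (SOME f. f \<in> X)" using X' by auto
qed

lemma edge_pushes_class:
  assumes "edge_pushes b e" "Y \<in> DD" "e \<in> Y"
  shows "\<not> edge_pops_in b Y" "e = (SOME f. f \<in> Y)"
proof -
  obtain Y' where Y': "Y' \<in> T" "e \<in> Y'" "e = (SOME f. f \<in> Y')" "\<not> edge_pops_in b Y'"
    using assms(1) unfolding edge_pushes_def by blast
  have "Y' = Y" using D_class_unique[OF _ assms(2) Y'(2) assms(3)] T_classD[OF Y'(1)] by blast
  then show "\<not> edge_pops_in b Y" "e = (SOME f. f \<in> Y)" using Y' by auto
qed

lemma ghost_pushes_not_popping: "ghost_pushes b e \<Longrightarrow> \<not> (\<forall>X. e \<in> X \<longrightarrow> ghost_pops_in b X)"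
  unfolding ghost_pushes_def by blast

lemma edge_pushes_not_popping: "edge_pushes b e \<Longrightarrow> \<not> (\<forall>Y. e \<in> Y \<longrightarrow> edge_pops_in b Y)"
  unfolding edge_pushes_def by blast

lemma path_edge_before_cursor:
  assumes "is_path \<beta>" "0 < j" "j \<le> length \<beta>"
  shows "\<beta>!(j-1) \<in> E1" "vtx (Pt v \<beta> j []) = r (\<beta>!(j-1))"
proof -
  show "\<beta>!(j-1) \<in> E1" using assms unfolding is_path_def by (simp add: subset_iff)
  show "vtx (Pt v \<beta> j []) = r (\<beta>!(j-1))"
  proof (cases "j < length \<beta>")
    case True
    then show ?thesis using assms unfolding is_path_def by (metis Suc_pred' vtx.simps(2))
  next
    case False
    then show ?thesis using assms by (simp add: last_conv_nth)
  qed
qed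

lemma edge_act_SomeD:
  assumes "edge_act e b = Some c"
  shows "valid b" "valid c" "vtx b = r e" "vtx c = s e" "e \<in> E1" "ghost_act e c = Some b"
proof -
  have vb: "valid b" using assms by (auto simp: edge_act_def split: if_splits)
  then obtain v \<beta> j ms where b: "b = Pt v \<beta> j ms" by (cases b) auto
  have "valid c \<and> vtx b = r e \<and> vtx c = s e \<and> e \<in> E1 \<and> ghost_act e c = Some b"
  proof (cases "edge_pushes b e")
    case True
    then have c: "c = Pt v \<beta> j (Up e # ms)" using assms vb b by (simp add: edge_act_def)
    have "\<not> ghost_pushes c e" using ghost_pushes_not_popping[of c e] c by auto
    then show ?thesis using True vb c b by (auto simp: edge_pushes_def ghost_act_def)
  next
    case False
    then have pop: "edge_pop b e = Some c" using assms vb by (simp add: edge_act_def)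
    show ?thesis
    proof (cases ms)
      case Nil
      then have j: "0 < j" "j \<le> length \<beta>" "\<beta>!(j-1) = e" and c: "c = Pt v \<beta> (j-1) []"
        using pop b by (auto split: if_splits)
      have path: "is_path \<beta>" using vb b Nil by simp
      with j have eE: "e \<in> E1" and vtx: "vtx b = r e"
        using path_edge_before_cursor b Nil by auto
      have "\<not> ghost_pushes c e" using ghost_pushes_not_popping[of c e] c j by auto
      moreover have "ghost_pop c e = Some b" using c j b Nil by auto
      ultimately show ?thesis using c j path eE vtx by (auto simp: ghost_act_def)
    next
      case (Cons m ms')
      then obtain f where m: "m = Dn f" using pop b by (cases m) auto
      then have fe: "f = e" and c: "c = Pt v \<beta> j ms'" using pop b Cons by (auto split: if_splits)
      have "valid c" "ghost_pushes c e" using vb b Cons m fe c by auto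
      then show ?thesis using b Cons m fe c by (auto simp: ghost_act_def ghost_pushes_def)
    qed
  qed
  then show "valid b" "valid c" "vtx b = r e" "vtx c = s e" "e \<in> E1" "ghost_act e c = Some b"
    using vb by auto
qed

lemma ghost_act_SomeD:
  assumes "ghost_act e c = Some b"
  shows "edge_act e b = Some c"
proof -
  have vc: "valid c" using assms by (auto simp: ghost_act_def split: if_splits)
  then obtain v \<beta> j ms where c: "c = Pt v \<beta> j ms" by (cases c) auto
  show ?thesis
  proof (cases "ghost_pushes c e")
    case True
    then have b: "b = Pt v \<beta> j (Dn e # ms)" using assms vc c by (simp add: ghost_act_def)
    have "\<not> edge_pushes b e" using edge_pushes_not_popping[of b e] b by auto
    moreover have "valid b" using b c vc True by simp
    ultimately show ?thesis using b c by (simp add: edge_act_def)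
  next
    case False
    then have pop: "ghost_pop c e = Some b" using assms vc by (simp add: ghost_act_def)
    show ?thesis
    proof (cases ms)
      case Nil
      then have j: "j < length \<beta>" "\<beta>!j = e" and b: "b = Pt v \<beta> (Suc j) []"
        using pop c by (auto split: if_splits)
      have "valid b" using vc c Nil j b by simp
      moreover have "\<not> edge_pushes b e" using edge_pushes_not_popping[of b e] b j by auto
      ultimately show ?thesis using b c j Nil by (simp add: edge_act_def)
    next
      case (Cons m ms')
      then obtain f where m: "m = Up f" using pop c by (cases m) auto
      then have fe: "f = e" and b: "b = Pt v \<beta> j ms'" using pop c Cons by (auto split: if_splits)
      have "valid b" "edge_pushes b e" using vc c Cons m fe b by auto
      then show ?thesis using b c Cons m fe by (simp add: edge_act_def)
    qed
  qed
qed

lemma ghost_act_defined: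
  assumes "ghost_act e b \<noteq> None"
  shows "valid b" "vtx b = s e"
  using assms edge_act_SomeD[OF ghost_act_SomeD] by blast+

lemma edge_act_defined:
  assumes "edge_act e b \<noteq> None"
  shows "valid b" "vtx b = r e"
  using assms edge_act_SomeD by blast+

lemma ghost_act_defined_iff: "ghost_act e b \<noteq> None \<longleftrightarrow> valid b \<and> (ghost_pushes b e \<or> ghost_pop b e \<noteq> None)"
  by (auto simp: ghost_act_def)

lemma edge_act_defined_iff: "edge_act e b \<noteq> None \<longleftrightarrow> valid b \<and> (edge_pushes b e \<or> edge_pop b e \<noteq> None)"
  by (auto simp: edge_act_def)

lemma ghost_pop_pops_in: "ghost_pop b e \<noteq> None \<Longrightarrow> e \<in> X \<Longrightarrow> ghost_pops_in b X"
  by (induction b e rule: ghost_pop.induct) (auto split: if_splits)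

lemma edge_pop_pops_in: "edge_pop b e \<noteq> None \<Longrightarrow> e \<in> Y \<Longrightarrow> edge_pops_in b Y"
  by (induction b e rule: edge_pop.induct) (auto split: if_splits)

lemma ghost_pop_unique: "ghost_pop b e1 \<noteq> None \<Longrightarrow> ghost_pop b e2 \<noteq> None \<Longrightarrow> e1 = e2"
  by (induction b e1 rule: ghost_pop.induct) (auto split: if_splits)

lemma edge_pop_unique: "edge_pop b e1 \<noteq> None \<Longrightarrow> edge_pop b e2 \<noteq> None \<Longrightarrow> e1 = e2"
  by (induction b e1 rule: edge_pop.induct) (auto split: if_splits)

lemma ghost_act_unique_in_C_class:
  assumes "X \<in> CC" "e1 \<in> X" "e2 \<in> X" "ghost_act e1 b \<noteq> None" "ghost_act e2 b \<noteq> None"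
  shows "e1 = e2"
proof -
  have "ghost_pushes b e1 \<or> ghost_pop b e1 \<noteq> None" "ghost_pushes b e2 \<or> ghost_pop b e2 \<noteq> None"
    using assms(4,5) ghost_act_defined_iff by blast+
  then show ?thesis
    using ghost_pushes_class[OF _ assms(1)] ghost_pop_pops_in ghost_pop_unique assms(2,3) by metis
qed

lemma edge_act_unique_in_D_class:
  assumes "Y \<in> DD" "e1 \<in> Y" "e2 \<in> Y" "edge_act e1 b \<noteq> None" "edge_act e2 b \<noteq> None"
  shows "e1 = e2"
proof -
  have "edge_pushes b e1 \<or> edge_pop b e1 \<noteq> None" "edge_pushes b e2 \<or> edge_pop b e2 \<noteq> None"
    using assms(4,5) edge_act_defined_iff by blast+
  then show ?thesis
    using edge_pushes_class[OF _ assms(1)] edge_pop_pops_in edge_pop_unique assms(2,3) by metis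
qed

lemma ghost_act_exists_in_S_class:
  assumes "X \<in> S" "valid b" "vtx b = src_set s X"
  shows "\<exists>e\<in>X. ghost_act e b \<noteq> None"
proof (cases "ghost_pops_in b X")
  case True
  then have "\<exists>e\<in>X. ghost_pop b e \<noteq> None"
    using assms(2) by (induction b X rule: ghost_pops_in.induct) auto
  then show ?thesis using assms(2) ghost_act_defined_iff by blast
next
  case False
  have XC: "X \<in> CC" using S_classD assms(1) by blast
  let ?e = "SOME f. f \<in> X"
  have eX: "?e \<in> X" using C_class_props(1)[OF XC] by (simp add: some_in_eq)
  moreover have "?e \<in> E1" "s ?e = vtx b" using eX C_class_props(2,3)[OF XC] assms(3) by auto
  ultimately have "ghost_pushes b ?e"
    using assms(1) False unfolding ghost_pushes_def by blast
  with eX assms(2) show ?thesis using ghost_act_defined_iff by blast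
qed

lemma edge_act_exists_in_T_class:
  assumes "Y \<in> T" "valid b" "vtx b = rng_set r Y"
  shows "\<exists>e\<in>Y. edge_act e b \<noteq> None"
proof (cases "edge_pops_in b Y")
  case True
  then have "\<exists>e\<in>Y. edge_pop b e \<noteq> None"
    using assms(2) by (induction b Y rule: edge_pops_in.induct) auto
  then show ?thesis using assms(2) edge_act_defined_iff by blast
next
  case False
  have YD: "Y \<in> DD" using T_classD assms(1) by blast
  let ?e = "SOME f. f \<in> Y"
  have eY: "?e \<in> Y" using D_class_props(1)[OF YD] by (simp add: some_in_eq)
  moreover have "?e \<in> E1" "r ?e = vtx b" using eY D_class_props(2,3)[OF YD] assms(3) by auto
  ultimately have "edge_pushes b ?e"
    using assms(1) False unfolding edge_pushes_def by blast
  with eY assms(2) show ?thesis using edge_act_defined_iff by blast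
qed

end

context bisep
begin

fun gen_act :: "('v, 'e) gen \<Rightarrow> ('v, 'e) point \<Rightarrow> ('v, 'e) point option" where
  "gen_act (V v) b = (if valid b \<and> vtx b = v then Some b else None)"
| "gen_act (Ed e) b = edge_act e b"
| "gen_act (Gh e) b = ghost_act e b"

abbreviation pt_act :: "('v, 'e) gen list \<Rightarrow> ('v, 'e) point \<Rightarrow> ('v, 'e) point option" where
  "pt_act \<equiv> word_act gen_act"

lemma partial_inj_gen_act: "partial_inj (gen_act x)"
proof (cases x)
  case (Ed e)
  then show ?thesis
    unfolding partial_inj_def by (metis edge_act_SomeD(6) gen_act.simps(2) option.inject)
next
  case (Gh e)
  then show ?thesis
    unfolding partial_inj_def by (metis ghost_act_SomeD gen_act.simps(3) option.inject)
qed (auto simp: partial_inj_def split: if_splits)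

lemma path_rels_annihilated:
  assumes "q \<in> path_rels E0 E1 r s"
  shows "annihilates gen_act q"
proof -
  consider (vv) v w where "q = fa_diff (fa_mono [V v, V w]) (if v = w then fa_mono [V v] else fa_zero)"
    | (se) e where "q = fa_diff (fa_mono [V (s e), Ed e]) (fa_mono [Ed e])"
    | (er) e where "q = fa_diff (fa_mono [Ed e, V (r e)]) (fa_mono [Ed e])"
    using assms unfolding path_rels_def fa_gen_def by (auto simp: fa_mono_mult)
  then show ?thesis
  proof cases
    case vv
    then show ?thesis
      by (cases "v = w") (auto intro!: annihilates_mono_diff annihilates_mono_zero)
  next
    case se
    have "pt_act [V (s e), Ed e] b = pt_act [Ed e] b" for b
      by (cases "edge_act e b") (auto dest: edge_act_SomeD)
    with se show ?thesis by (simp add: annihilates_mono_diff)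
  next
    case er
    have "pt_act [Ed e, V (r e)] b = pt_act [Ed e] b" for b
      by (cases "edge_act e b") (auto dest: edge_act_SomeD)
    with er show ?thesis by (simp add: annihilates_mono_diff)
  qed
qed

lemma ghost_rels_annihilated:
  assumes "q \<in> ghost_rels E0 E1 r s"
  shows "annihilates gen_act q"
proof -
  consider (rg) e where "q = fa_diff (fa_mono [V (r e), Gh e]) (fa_mono [Gh e])"
    | (gs) e where "q = fa_diff (fa_mono [Gh e, V (s e)]) (fa_mono [Gh e])"
    using assms unfolding ghost_rels_def by (auto simp: fa_gen_def fa_mono_mult)
  then show ?thesis
  proof cases
    case rg
    have "pt_act [V (r e), Gh e] b = pt_act [Gh e] b" for b
      by (cases "ghost_act e b") (auto dest: ghost_act_SomeD edge_act_SomeD)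
    with rg show ?thesis by (simp add: annihilates_mono_diff)
  next
    case gs
    have "pt_act [Gh e, V (s e)] b = pt_act [Gh e] b" for b
      using ghost_act_defined[of e b] by (cases "ghost_act e b") auto
    with gs show ?thesis by (simp add: annihilates_mono_diff)
  qed
qed

end

context bisep
begin

lemma act_coeff_vertex:
  "act_coeff gen_act (fa_gen (V v)) b c = (if valid b \<and> vtx b = v \<and> c = b then 1 else (0::'k::field))"
  by (auto simp: fa_gen_def act_coeff_mono)

lemma finite_supp_edge_ghost:
  "finite (supp (fa_mult (edge_XY X Y) (ghost_XY Y' X') :: _ \<Rightarrow> 'k::field))"
  "finite (supp (fa_mult (ghost_XY Y' X') (edge_XY X Y) :: _ \<Rightarrow> 'k::field))"
  by (simp_all add: edge_XY_def ghost_XY_def fa_gen_def fa_mono_mult fa_mult_zero_left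
      fa_mult_zero_right supp_fa_mono supp_fa_zero)

lemma sum_ghost_acting_in_S_class:
  assumes "X \<in> S"
  shows "(\<Sum>e\<in>X. if ghost_act e b \<noteq> None then 1 else 0) =
    (if valid b \<and> vtx b = src_set s X then 1 else (0::'k::field))"
proof (cases "valid b \<and> vtx b = src_set s X")
  case True
  then obtain e0 where e0: "e0 \<in> X" "ghost_act e0 b \<noteq> None"
    using ghost_act_exists_in_S_class[OF assms] by blast
  have "ghost_act e b \<noteq> None \<longleftrightarrow> e = e0" if "e \<in> X" for e
    using ghost_act_unique_in_C_class[of X e e0 b] that e0 S_classD[OF assms] by blast
  then have "(\<Sum>e\<in>X. if ghost_act e b \<noteq> None then 1 else 0) = (\<Sum>e\<in>X. if e = e0 then 1 else (0::'k))"
    by (intro sum.cong) auto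
  with True e0(1) S_classD[OF assms] show ?thesis by simp
next
  case False
  have "ghost_act e b = None" if "e \<in> X" for e
    using False ghost_act_defined C_class_props(3)[OF _ that] S_classD[OF assms] by metis
  with False show ?thesis by simp
qed

lemma sum_edge_acting_in_T_class:
  assumes "Y \<in> T"
  shows "(\<Sum>e\<in>Y. if edge_act e b \<noteq> None then 1 else 0) =
    (if valid b \<and> vtx b = rng_set r Y then 1 else (0::'k::field))"
proof (cases "valid b \<and> vtx b = rng_set r Y")
  case True
  then obtain e0 where e0: "e0 \<in> Y" "edge_act e0 b \<noteq> None"
    using edge_act_exists_in_T_class[OF assms] by blast
  have "edge_act e b \<noteq> None \<longleftrightarrow> e = e0" if "e \<in> Y" for e
    using edge_act_unique_in_D_class[of Y e e0 b] that e0 T_classD[OF assms] by blast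
  then have "(\<Sum>e\<in>Y. if edge_act e b \<noteq> None then 1 else 0) = (\<Sum>e\<in>Y. if e = e0 then 1 else (0::'k))"
    by (intro sum.cong) auto
  with True e0(1) T_classD[OF assms] show ?thesis by simp
next
  case False
  have "edge_act e b = None" if "e \<in> Y" for e
    using False edge_act_defined D_class_props(3)[OF _ that] T_classD[OF assms] by metis
  with False show ?thesis by simp
qed

lemma act_coeff_edge_ghost:
  assumes "X \<in> CC" "X' \<in> CC" "Y \<in> DD" "e \<in> X" "e \<in> Y"
  shows "act_coeff gen_act (fa_mult (edge_XY X Y) (ghost_XY Y X')) b c =
    (if X = X' \<and> c = b \<and> ghost_act e b \<noteq> None then 1 else (0::'k::field))"
proof (cases "Y \<inter> X' = {}")
  case True
  then have "X \<noteq> X'" using assms(4,5) by blast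
  with True show ?thesis by (simp add: ghost_XY_def fa_mult_zero_right act_coeff_zero)
next
  case False
  then obtain f where f: "f \<in> Y" "f \<in> X'" by blast
  have "X \<inter> Y = {e}" "X' \<inter> Y = {f}" using C_D_inter assms f by auto
  then have summand: "fa_mult (edge_XY X Y) (ghost_XY Y X') = fa_mono [Ed e, Gh f]"
    by (simp add: edge_XY_def ghost_XY_def fa_gen_def fa_mono_mult Int_commute)
  have "pt_act [Ed e, Gh f] b = Some c \<longleftrightarrow> X = X' \<and> c = b \<and> ghost_act e b \<noteq> None"
  proof
    assume "pt_act [Ed e, Gh f] b = Some c"
    then obtain d where d: "ghost_act f b = Some d" "edge_act e d = Some c"
      by (auto simp: bind_eq_Some_conv)
    have fb: "edge_act f d = Some b" by (intro ghost_act_SomeD) (rule d(1))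
    then have "e = f" using edge_act_unique_in_D_class[OF assms(3) assms(5) f(1)] d(2) by blast
    then have "X = X'" using C_class_unique[OF assms(1,2) assms(4)] f(2) by simp
    moreover have "c = b" using fb d(2) \<open>e = f\<close> by simp
    ultimately show "X = X' \<and> c = b \<and> ghost_act e b \<noteq> None" using d(1) \<open>e = f\<close> by simp
  next
    assume "X = X' \<and> c = b \<and> ghost_act e b \<noteq> None"
    moreover from this have "f = e" using \<open>X \<inter> Y = {e}\<close> f by blast
    ultimately show "pt_act [Ed e, Gh f] b = Some c"
      by (cases "ghost_act e b") (auto dest: ghost_act_SomeD)
  qed
  then show ?thesis by (simp add: summand act_coeff_mono)
qed

lemma act_coeff_ghost_edge:
  assumes "Y \<in> DD" "Y' \<in> DD" "X \<in> CC" "e \<in> Y" "e \<in> X"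
  shows "act_coeff gen_act (fa_mult (ghost_XY Y X) (edge_XY X Y')) b c =
    (if Y = Y' \<and> c = b \<and> edge_act e b \<noteq> None then 1 else (0::'k::field))"
proof (cases "X \<inter> Y' = {}")
  case True
  then have "Y \<noteq> Y'" using assms(4,5) by blast
  with True show ?thesis by (simp add: edge_XY_def fa_mult_zero_right act_coeff_zero)
next
  case False
  then obtain f where f: "f \<in> X" "f \<in> Y'" by blast
  have "X \<inter> Y = {e}" "X \<inter> Y' = {f}" using C_D_inter assms f by auto
  then have summand: "fa_mult (ghost_XY Y X) (edge_XY X Y') = fa_mono [Gh e, Ed f]"
    by (simp add: edge_XY_def ghost_XY_def fa_gen_def fa_mono_mult Int_commute)
  have "pt_act [Gh e, Ed f] b = Some c \<longleftrightarrow> Y = Y' \<and> c = b \<and> edge_act e b \<noteq> None"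
  proof
    assume "pt_act [Gh e, Ed f] b = Some c"
    then obtain d where d: "edge_act f b = Some d" "ghost_act e d = Some c"
      by (auto simp: bind_eq_Some_conv)
    have fb: "ghost_act f d = Some b" by (intro edge_act_SomeD(6)) (rule d(1))
    then have "e = f" using ghost_act_unique_in_C_class[OF assms(3) assms(5) f(1)] d(2) by blast
    then have "Y = Y'" using D_class_unique[OF assms(1,2) assms(4)] f(2) by simp
    moreover have "c = b" using fb d(2) \<open>e = f\<close> by simp
    ultimately show "Y = Y' \<and> c = b \<and> edge_act e b \<noteq> None" using d(1) \<open>e = f\<close> by simp
  next
    assume "Y = Y' \<and> c = b \<and> edge_act e b \<noteq> None"
    moreover from this have "f = e" using \<open>X \<inter> Y = {e}\<close> f by blast
    ultimately show "pt_act [Gh e, Ed f] b = Some c"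
      by (cases "edge_act e b") (auto dest: edge_act_SomeD(6))
  qed
  then show ?thesis by (simp add: summand act_coeff_mono)
qed

end

context bisep
begin

lemma CL_S_rel_annihilated:
  assumes "X \<in> S" "X' \<in> S"
  shows "annihilates gen_act (fa_diff
      (fa_sum (\<lambda>Y. fa_mult (edge_XY X Y) (ghost_XY Y X')) {Y \<in> DD. X \<inter> Y \<noteq> {}})
      (if X = X' then fa_gen (V (src_set s X)) else (fa_zero :: ('v, 'e) gen list \<Rightarrow> 'k::field)))"
proof -
  define I where "I = {Y \<in> DD. X \<inter> Y \<noteq> {}}"
  define G where "G = (\<lambda>Y. fa_mult (edge_XY X Y) (ghost_XY Y X') :: ('v, 'e) gen list \<Rightarrow> 'k)"
  define rhs where "rhs = (if X = X' then fa_gen (V (src_set s X)) else fa_zero :: ('v, 'e) gen list \<Rightarrow> 'k)"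
  have XC: "X \<in> CC" "X' \<in> CC" and finX: "finite X" using S_classD assms by auto
  have bij: "bij_betw (\<lambda>Y. the_elem (X \<inter> Y)) I X"
    unfolding I_def by (rule bij_betw_D_classes_meeting[OF XC(1)])
  then have finI: "finite I" using finX bij_betw_finite by blast
  have finG: "finite (supp (G Y))" for Y unfolding G_def by (rule finite_supp_edge_ghost)
  have finR: "finite (supp rhs)" by (simp add: rhs_def fa_gen_def supp_fa_mono supp_fa_zero)
  have coeffs: "act_coeff gen_act (fa_sum G I) b c = act_coeff gen_act rhs b c" for b c
  proof -
    have "act_coeff gen_act (fa_sum G I) b c = (\<Sum>Y\<in>I. act_coeff gen_act (G Y) b c)"
      using finI finG by (rule act_coeff_sum)
    also have "\<dots> = (\<Sum>Y\<in>I. if X = X' \<and> c = b \<and> ghost_act (the_elem (X \<inter> Y)) b \<noteq> None then 1 else 0)"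
    proof (rule sum.cong[OF refl])
      fix Y assume "Y \<in> I"
      then obtain e where e: "Y \<in> DD" "e \<in> X" "e \<in> Y" unfolding I_def by blast
      then have "the_elem (X \<inter> Y) = e" using C_D_inter[OF XC(1)] by simp
      then show "act_coeff gen_act (G Y) b c =
          (if X = X' \<and> c = b \<and> ghost_act (the_elem (X \<inter> Y)) b \<noteq> None then 1 else 0)"
        unfolding G_def act_coeff_edge_ghost[OF XC e] by simp
    qed
    also have "\<dots> = (\<Sum>e\<in>X. if X = X' \<and> c = b \<and> ghost_act e b \<noteq> None then 1 else 0)"
      using bij by (rule sum.reindex_bij_betw)
    also have "\<dots> = (if X = X' \<and> c = b then \<Sum>e\<in>X. if ghost_act e b \<noteq> None then 1 else 0 else 0)"
      by (cases "X = X'"; cases "c = b") simp_all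
    also have "\<dots> = act_coeff gen_act rhs b c"
      using sum_ghost_acting_in_S_class[OF assms(1), of b]
      by (auto simp: rhs_def act_coeff_vertex act_coeff_zero)
    finally show ?thesis .
  qed
  have "annihilates gen_act (fa_diff (fa_sum G I) rhs)"
    by (intro annihilates_fa_diff_of_coeffs finite_supp_fa_sum) (use finI finG finR coeffs in auto)
  then show ?thesis unfolding G_def I_def rhs_def .
qed

lemma CL_T_rel_annihilated:
  assumes "Y \<in> T" "Y' \<in> T"
  shows "annihilates gen_act (fa_diff
      (fa_sum (\<lambda>X. fa_mult (ghost_XY Y X) (edge_XY X Y')) {X \<in> CC. Y \<inter> X \<noteq> {}})
      (if Y = Y' then fa_gen (V (rng_set r Y)) else (fa_zero :: ('v, 'e) gen list \<Rightarrow> 'k::field)))"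
proof -
  define J where "J = {X \<in> CC. Y \<inter> X \<noteq> {}}"
  define G where "G = (\<lambda>X. fa_mult (ghost_XY Y X) (edge_XY X Y') :: ('v, 'e) gen list \<Rightarrow> 'k)"
  define rhs where "rhs = (if Y = Y' then fa_gen (V (rng_set r Y)) else fa_zero :: ('v, 'e) gen list \<Rightarrow> 'k)"
  have YD: "Y \<in> DD" "Y' \<in> DD" and finY: "finite Y" using T_classD assms by auto
  have bij: "bij_betw (\<lambda>X. the_elem (Y \<inter> X)) J Y"
    unfolding J_def by (rule bij_betw_C_classes_meeting[OF YD(1)])
  then have finJ: "finite J" using finY bij_betw_finite by blast
  have finG: "finite (supp (G X))" for X unfolding G_def by (rule finite_supp_edge_ghost)
  have finR: "finite (supp rhs)" by (simp add: rhs_def fa_gen_def supp_fa_mono supp_fa_zero)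
  have coeffs: "act_coeff gen_act (fa_sum G J) b c = act_coeff gen_act rhs b c" for b c
  proof -
    have "act_coeff gen_act (fa_sum G J) b c = (\<Sum>X\<in>J. act_coeff gen_act (G X) b c)"
      using finJ finG by (rule act_coeff_sum)
    also have "\<dots> = (\<Sum>X\<in>J. if Y = Y' \<and> c = b \<and> edge_act (the_elem (Y \<inter> X)) b \<noteq> None then 1 else 0)"
    proof (rule sum.cong[OF refl])
      fix X assume "X \<in> J"
      then obtain e where e: "X \<in> CC" "e \<in> Y" "e \<in> X" unfolding J_def by blast
      then have "the_elem (Y \<inter> X) = e" using C_D_inter[OF _ YD(1)] by (simp add: Int_commute)
      then show "act_coeff gen_act (G X) b c =
          (if Y = Y' \<and> c = b \<and> edge_act (the_elem (Y \<inter> X)) b \<noteq> None then 1 else 0)"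
        unfolding G_def act_coeff_ghost_edge[OF YD e] by simp
    qed
    also have "\<dots> = (\<Sum>e\<in>Y. if Y = Y' \<and> c = b \<and> edge_act e b \<noteq> None then 1 else 0)"
      using bij by (rule sum.reindex_bij_betw)
    also have "\<dots> = (if Y = Y' \<and> c = b then \<Sum>e\<in>Y. if edge_act e b \<noteq> None then 1 else 0 else 0)"
      by (cases "Y = Y'"; cases "c = b") simp_all
    also have "\<dots> = act_coeff gen_act rhs b c"
      using sum_edge_acting_in_T_class[OF assms(1), of b]
      by (auto simp: rhs_def act_coeff_vertex act_coeff_zero)
    finally show ?thesis .
  qed
  have "annihilates gen_act (fa_diff (fa_sum G J) rhs)"
    by (intro annihilates_fa_diff_of_coeffs finite_supp_fa_sum) (use finJ finG finR coeffs in auto)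
  then show ?thesis unfolding G_def J_def rhs_def .
qed

theorem CL_ideal_annihilated:
  assumes "x \<in> fa_ideal (dbl_alph E0 E1)
      (path_rels E0 E1 r s \<union> ghost_rels E0 E1 r s \<union> CL_rels E0 E1 r s Cv Dv S T)"
  shows "annihilates gen_act x"
  using assms partial_inj_gen_act
proof (rule annihilates_fa_ideal)
  fix q assume "q \<in> path_rels E0 E1 r s \<union> ghost_rels E0 E1 r s \<union> CL_rels E0 E1 r s Cv Dv S T"
  then show "annihilates gen_act q"
    using path_rels_annihilated ghost_rels_annihilated CL_S_rel_annihilated CL_T_rel_annihilated
    unfolding CL_rels_def by blast
qed

end

section \<open>Normal forms in the path algebra\<close>

context bisep
begin

abbreviation "PA \<equiv> path_alph E0 E1"
abbreviation "PR \<equiv> path_rels E0 E1 r s"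

definition normal_word :: "('v, 'e) gen list \<Rightarrow> bool" where
  "normal_word n \<longleftrightarrow> n = [] \<or> (\<exists>v\<in>E0. n = [V v]) \<or> (\<exists>\<alpha>. \<alpha> \<noteq> [] \<and> is_path \<alpha> \<and> n = map Ed \<alpha>)"

fun nf_step :: "('v, 'e) gen \<Rightarrow> ('v, 'e) gen list \<Rightarrow> ('v, 'e) gen list option" where
  "nf_step (V v) [] = Some [V v]"
| "nf_step (V v) [V w] = (if v = w then Some [V v] else None)"
| "nf_step (V v) (Ed a # n) = (if v = s a then Some (Ed a # n) else None)"
| "nf_step (Ed e) [] = Some [Ed e]"
| "nf_step (Ed e) [V w] = (if r e = w then Some [Ed e] else None)"
| "nf_step (Ed e) (Ed a # n) = (if r e = s a then Some (Ed e # Ed a # n) else None)"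
| "nf_step _ _ = None"

text \<open>\<open>None\<close> stands for the word being zero in the path algebra.\<close>
fun normal_form :: "('v, 'e) gen list \<Rightarrow> ('v, 'e) gen list option" where
  "normal_form [] = Some []"
| "normal_form (x # w) = Option.bind (normal_form w) (nf_step x)"

definition nf_poly :: "('v, 'e) gen list \<Rightarrow> ('v, 'e) gen list \<Rightarrow> 'k::field" where
  "nf_poly w = (case normal_form w of None \<Rightarrow> fa_zero | Some n \<Rightarrow> fa_mono n)"

lemma is_path_Cons: "is_path (e # \<alpha>) \<longleftrightarrow> e \<in> E1 \<and> is_path \<alpha> \<and> (\<alpha> \<noteq> [] \<longrightarrow> r e = s (hd \<alpha>))"
proof -
  have "(\<forall>i. Suc i < length (e # \<alpha>) \<longrightarrow> r ((e # \<alpha>)!i) = s ((e # \<alpha>)!Suc i)) \<longleftrightarrow>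
      (\<alpha> \<noteq> [] \<longrightarrow> r e = s (hd \<alpha>)) \<and> (\<forall>i. Suc i < length \<alpha> \<longrightarrow> r (\<alpha>!i) = s (\<alpha>!Suc i))"
    (is "?L \<longleftrightarrow> ?R")
  proof
    assume ?L
    then show ?R by (auto simp: hd_conv_nth)
  next
    assume ?R
    then show ?L by (auto simp: hd_conv_nth nth_Cons split: nat.splits)
  qed
  then show ?thesis unfolding is_path_def by auto
qed

lemma path_alphE:
  assumes "x \<in> PA"
  obtains v where "v \<in> E0" "x = V v" | e where "e \<in> E1" "x = Ed e"
  using assms unfolding path_alph_def by blast

lemma normal_wordE:
  assumes "normal_word n"
  obtains "n = []" | v where "v \<in> E0" "n = [V v]" | a \<alpha> where "is_path (a # \<alpha>)" "n = Ed a # map Ed \<alpha>"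
  using assms unfolding normal_word_def by (metis list.exhaust list.simps(9))

lemma normal_form_normal:
  assumes "w \<in> lists PA" "normal_form w = Some n"
  shows "normal_word n"
  using assms(2,1)
proof (induction w arbitrary: n)
  case Nil
  then show ?case by (simp add: normal_word_def)
next
  case (Cons x w)
  obtain n' where n': "normal_form w = Some n'" "nf_step x n' = Some n"
    using Cons.prems by (auto simp: bind_eq_Some_conv)
  have "x \<in> PA" "w \<in> lists PA" using Cons.prems by auto
  with Cons.IH n'(1) have "normal_word n'" by simp
  moreover note \<open>x \<in> PA\<close>
  from \<open>x \<in> PA\<close> show ?case
  proof (cases rule: path_alphE)
    case (1 v)
    then have "n = [V v] \<or> n = n'"
      using n'(2) \<open>normal_word n'\<close> by (elim normal_wordE) (auto split: if_splits)
    with 1 \<open>normal_word n'\<close> show ?thesis by (auto simp: normal_word_def)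
  next
    case (2 e)
    have single: "normal_word [Ed e]"
      unfolding normal_word_def using 2 by (intro disjI2 exI[of _ "[e]"]) (simp add: is_path_def)
    from \<open>normal_word n'\<close> show ?thesis
    proof (cases rule: normal_wordE)
      case (3 a \<alpha>)
      with n' 2 have "n = map Ed (e # a # \<alpha>)" "is_path (e # a # \<alpha>)"
        by (auto simp: is_path_Cons split: if_splits)
      then show ?thesis unfolding normal_word_def by blast
    qed (use n' 2 single in \<open>auto split: if_splits\<close>)
  qed
qed

lemma vertex_rels:
  "v \<in> E0 \<Longrightarrow> fa_diff (fa_mono [V v, V v]) (fa_mono [V v]) \<in> (PR :: (_ \<Rightarrow> 'k::field) set)"
  "v \<in> E0 \<Longrightarrow> w \<in> E0 \<Longrightarrow> v \<noteq> w \<Longrightarrow> fa_diff (fa_mono [V v, V w]) fa_zero \<in> (PR :: (_ \<Rightarrow> 'k::field) set)"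
  unfolding path_rels_def fa_gen_def fa_mono_mult by auto

lemma edge_rels:
  "e \<in> E1 \<Longrightarrow> fa_diff (fa_mono [V (s e), Ed e]) (fa_mono [Ed e]) \<in> (PR :: (_ \<Rightarrow> 'k::field) set)"
  "e \<in> E1 \<Longrightarrow> fa_diff (fa_mono [Ed e, V (r e)]) (fa_mono [Ed e]) \<in> (PR :: (_ \<Rightarrow> 'k::field) set)"
  unfolding path_rels_def fa_gen_def fa_mono_mult by auto

lemma map_Ed_in_lists_path_alph: "set \<alpha> \<subseteq> E1 \<Longrightarrow> map Ed \<alpha> \<in> lists PA"
  by (induction \<alpha>) (auto simp: path_alph_def)

lemma in_path_alph: "v \<in> E0 \<Longrightarrow> V v \<in> PA" "e \<in> E1 \<Longrightarrow> Ed e \<in> PA"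
  by (simp_all add: path_alph_def)

lemma fa_cong_vertex_nf_step:
  assumes "normal_word n" "v \<in> E0"
  shows "fa_cong PA (PR :: (_ \<Rightarrow> 'k::field) set) (fa_mono (V v # n))
    (case nf_step (V v) n of None \<Rightarrow> fa_zero | Some m \<Rightarrow> fa_mono m)"
  using assms(1)
proof (cases rule: normal_wordE)
  case 1
  then show ?thesis by (simp add: fa_cong_refl)
next
  case (2 w)
  then show ?thesis
    using fa_cong_relator[OF vertex_rels(1)[of v], where A=PA and u="[]" and w="[]"]
      fa_cong_relator_zero[OF vertex_rels(2)[of v w], where A=PA and u="[]" and w="[]"] assms(2)
    by (cases "v = w") auto
next
  case (3 a \<alpha>)
  then have a: "a \<in> E1" "map Ed \<alpha> \<in> lists PA" using map_Ed_in_lists_path_alph unfolding is_path_def by auto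
  have sa: "s a \<in> E0" using edge_ends a(1) by blast
  show ?thesis
  proof (cases "v = s a")
    case True
    with 3 show ?thesis
      using fa_cong_relator[OF edge_rels(1)[OF a(1)], where A=PA and u="[]" and w="map Ed \<alpha>"] a(2) by simp
  next
    case False
    have "fa_cong PA PR (fa_mono (V v # Ed a # map Ed \<alpha>)) (fa_mono (V v # V (s a) # Ed a # map Ed \<alpha>) :: _ \<Rightarrow> 'k)"
      using fa_cong_sym[OF fa_cong_relator[OF edge_rels(1)[OF a(1)], where A=PA and u="[V v]" and w="map Ed \<alpha>"]]
        a assms(2) by (simp add: in_path_alph)
    also have "fa_cong PA PR \<dots> fa_zero"
      using fa_cong_relator_zero[OF vertex_rels(2)[OF assms(2) sa False], where A=PA and u="[]" and w="Ed a # map Ed \<alpha>"] a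
      by (simp add: in_path_alph)
    finally show ?thesis using 3 False by simp
  qed
qed

lemma fa_cong_edge_nf_step:
  assumes "normal_word n" "e \<in> E1"
  shows "fa_cong PA (PR :: (_ \<Rightarrow> 'k::field) set) (fa_mono (Ed e # n))
    (case nf_step (Ed e) n of None \<Rightarrow> fa_zero | Some m \<Rightarrow> fa_mono m)"
  using assms(1)
proof (cases rule: normal_wordE)
  case 1
  then show ?thesis by (simp add: fa_cong_refl)
next
  case (2 w)
  have re: "r e \<in> E0" using edge_ends assms(2) by blast
  show ?thesis
  proof (cases "r e = w")
    case True
    with 2 show ?thesis using fa_cong_relator[OF edge_rels(2)[OF assms(2)], where A=PA and u="[]" and w="[]"] by simp
  next
    case False
    have "fa_cong PA PR (fa_mono [Ed e, V w]) (fa_mono [Ed e, V (r e), V w] :: _ \<Rightarrow> 'k)"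
      using fa_cong_sym[OF fa_cong_relator[OF edge_rels(2)[OF assms(2)], where A=PA and u="[]" and w="[V w]"]] 2
      by (simp add: in_path_alph)
    also have "fa_cong PA PR \<dots> fa_zero"
      using fa_cong_relator_zero[OF vertex_rels(2)[OF re _ False], where A=PA and u="[Ed e]" and w="[]"] 2 assms(2)
      by (simp add: in_path_alph)
    finally show ?thesis using 2 False by simp
  qed
next
  case (3 a \<alpha>)
  then have a: "a \<in> E1" "map Ed \<alpha> \<in> lists PA" using map_Ed_in_lists_path_alph unfolding is_path_def by auto
  have re: "r e \<in> E0" and sa: "s a \<in> E0" using edge_ends assms(2) a(1) by blast+
  show ?thesis
  proof (cases "r e = s a")
    case True
    with 3 show ?thesis by (simp add: fa_cong_refl)
  next
    case False
    have "fa_cong PA PR (fa_mono (Ed e # Ed a # map Ed \<alpha>)) (fa_mono (Ed e # V (s a) # Ed a # map Ed \<alpha>) :: _ \<Rightarrow> 'k)"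
      using fa_cong_sym[OF fa_cong_relator[OF edge_rels(1)[OF a(1)], where A=PA and u="[Ed e]" and w="map Ed \<alpha>"]]
        a assms(2) by (simp add: in_path_alph)
    also have "fa_cong PA PR \<dots> (fa_mono (Ed e # V (r e) # V (s a) # Ed a # map Ed \<alpha>))"
      using fa_cong_sym[OF fa_cong_relator[OF edge_rels(2)[OF assms(2)], where A=PA and u="[]" and w="V (s a) # Ed a # map Ed \<alpha>"]]
        a sa by (simp add: in_path_alph)
    also have "fa_cong PA PR \<dots> fa_zero"
      using fa_cong_relator_zero[OF vertex_rels(2)[OF re sa False], where A=PA and u="[Ed e]" and w="Ed a # map Ed \<alpha>"] a assms(2)
      by (simp add: in_path_alph)
    finally show ?thesis using 3 False by simp
  qed
qed

lemma fa_cong_nf_poly: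
  assumes "w \<in> lists PA"
  shows "fa_cong PA (PR :: (_ \<Rightarrow> 'k::field) set) (fa_mono w) (nf_poly w)"
  using assms
proof (induction w rule: lists.induct)
  case Nil
  then show ?case by (simp add: nf_poly_def fa_cong_refl)
next
  case (Cons x w)
  then have x: "x \<in> PA" and w: "w \<in> lists PA" by auto
  have "fa_cong PA PR (fa_mono (x # w)) (fa_sandwich [x] (nf_poly w) [] :: _ \<Rightarrow> 'k)"
    using fa_cong_sandwich[OF Cons.IH, of "[x]" "[]"] x by (simp add: fa_sandwich_linear)
  also have "fa_cong PA PR \<dots> (nf_poly (x # w))"
  proof (cases "normal_form w")
    case None
    then show ?thesis by (simp add: nf_poly_def fa_sandwich_linear fa_cong_refl)
  next
    case (Some n)
    then have "normal_word n" using normal_form_normal[OF w] by blast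
    with x have "fa_cong PA PR (fa_mono (x # n))
        (case nf_step x n of None \<Rightarrow> fa_zero | Some m \<Rightarrow> (fa_mono m :: _ \<Rightarrow> 'k))"
      by (elim path_alphE) (simp_all add: fa_cong_vertex_nf_step fa_cong_edge_nf_step)
    with Some show ?thesis by (simp add: nf_poly_def fa_sandwich_linear)
  qed
  finally show ?case .
qed

end

section \<open>Injectivity\<close>

fun ups :: "('v, 'e) point \<Rightarrow> nat" where
  "ups (Pt v \<beta> j ms) = length [m\<leftarrow>ms. case m of Up _ \<Rightarrow> True | Dn _ \<Rightarrow> False]"
| "ups Junk = 0"

fun downs :: "('v, 'e) point \<Rightarrow> nat" where
  "downs (Pt v \<beta> j ms) = length [m\<leftarrow>ms. case m of Up _ \<Rightarrow> False | Dn _ \<Rightarrow> True]"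
| "downs Junk = 0"

fun cursor :: "('v, 'e) point \<Rightarrow> nat" where
  "cursor (Pt v \<beta> j ms) = j"
| "cursor Junk = 0"

fun base :: "('v, 'e) point \<Rightarrow> 'v \<times> 'e list" where
  "base (Pt v \<beta> j ms) = (v, \<beta>)"
| "base Junk = undefined"

definition height :: "('v, 'e) point \<Rightarrow> int" where
  "height b = int (ups b) - int (downs b) - int (cursor b)"

context bisep
begin

lemma edge_act_height:
  assumes "edge_act e b = Some c"
  shows "base c = base b \<and> height c = height b + 1 \<and> ups b \<le> ups c \<and> downs c \<le> downs b
    \<and> b \<noteq> Junk \<and> c \<noteq> Junk"
proof -
  have vb: "valid b" using edge_act_SomeD(1)[OF assms] .
  then obtain v \<beta> j ms where b: "b = Pt v \<beta> j ms" by (cases b) auto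
  show ?thesis
  proof (cases "edge_pushes b e")
    case True
    then have "c = Pt v \<beta> j (Up e # ms)" using assms vb b by (simp add: edge_act_def)
    then show ?thesis using b by (simp add: height_def)
  next
    case False
    then have pop: "edge_pop b e = Some c" using assms vb by (simp add: edge_act_def)
    show ?thesis
    proof (cases ms)
      case Nil
      then have "0 < j" "c = Pt v \<beta> (j-1) []" using pop b by (auto split: if_splits)
      then show ?thesis using b Nil by (simp add: height_def)
    next
      case (Cons m ms')
      then obtain f where m: "m = Dn f" using pop b by (cases m) auto
      then have "c = Pt v \<beta> j ms'" using pop b Cons by (auto split: if_splits)
      then show ?thesis using b Cons m by (simp add: height_def)
    qed
  qed
qed

lemma path_act_height:
  assumes "pt_act (map Ed \<alpha>) b = Some c" "b \<noteq> Junk"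
  shows "base c = base b \<and> height c = height b + int (length \<alpha>) \<and> ups b \<le> ups c \<and> downs c \<le> downs b
    \<and> c \<noteq> Junk"
  using assms(1)
proof (induction \<alpha> arbitrary: c)
  case (Cons e \<alpha>)
  then obtain d where d: "pt_act (map Ed \<alpha>) b = Some d" "edge_act e d = Some c"
    by (auto simp: bind_eq_Some_conv)
  then show ?case using Cons.IH[OF d(1)] edge_act_height[OF d(2)] by auto
qed (use assms(2) in simp)

lemma pt_act_Junk: "pt_act z Junk = Some c \<Longrightarrow> z = []"
proof (induction z arbitrary: c)
  case (Cons x z)
  then obtain d where d: "pt_act z Junk = Some d" "gen_act x d = Some c"
    by (auto simp: bind_eq_Some_conv)
  have "d = Junk" using Cons.IH[OF d(1)] d(1) by simp
  with d(2) show ?case by (cases x) (auto simp: edge_act_def ghost_act_def)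
qed simp

lemma path_act_segment:
  assumes "is_path \<beta>" "j \<le> length \<beta>" "k \<le> j"
  shows "pt_act (map Ed (take k (drop (j - k) \<beta>))) (Pt v \<beta> j []) = Some (Pt v \<beta> (j - k) [])"
  using assms(3)
proof (induction k)
  case (Suc k)
  let ?i = "j - Suc k"
  have i: "?i < length \<beta>" "j - k = Suc ?i" using Suc.prems assms(2) by auto
  have "drop ?i \<beta> = \<beta>!?i # drop (Suc ?i) \<beta>" using i(1) by (simp add: Cons_nth_drop_Suc)
  then have "take (Suc k) (drop ?i \<beta>) = \<beta>!?i # take k (drop (j - k) \<beta>)"
    unfolding i(2) by simp
  moreover have "valid (Pt v \<beta> (Suc ?i) [])" using assms(1) i by simp
  moreover have "\<not> edge_pushes (Pt v \<beta> (Suc ?i) []) (\<beta>!?i)"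
    using edge_pushes_not_popping[of "Pt v \<beta> (Suc ?i) []" "\<beta>!?i"] i by auto
  ultimately show ?case using Suc i by (simp add: edge_act_def)
qed simp

lemma path_act_segment_unique:
  assumes "pt_act (map Ed \<alpha>) (Pt v \<beta> j []) = Some (Pt v \<beta> i [])"
  shows "i \<le> j \<and> \<alpha> = take (j - i) (drop i \<beta>)"
  using assms
proof (induction \<alpha> arbitrary: i)
  case (Cons e \<alpha>)
  obtain d where d: "pt_act (map Ed \<alpha>) (Pt v \<beta> j []) = Some d" "edge_act e d = Some (Pt v \<beta> i [])"
    using Cons.prems by (auto simp: bind_eq_Some_conv)
  have "base d = (v, \<beta>)" "downs d = 0" "ups d = 0" "d \<noteq> Junk"
    using path_act_height[OF d(1)] edge_act_height[OF d(2)] by auto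
  then obtain j' ms where dj: "d = Pt v \<beta> j' ms" "downs d = 0" "ups d = 0"
    by (cases d) auto
  then have "ms = []" by (cases ms) (auto split: move.splits)
  with dj(1) have dj: "d = Pt v \<beta> j' []" by simp
  have "\<not> edge_pushes d e" using d(2) edge_act_SomeD(1)[OF d(2)] dj by (auto simp: edge_act_def)
  then have "edge_pop d e = Some (Pt v \<beta> i [])" using d(2) edge_act_SomeD(1)[OF d(2)] by (simp add: edge_act_def)
  then have j': "0 < j'" "j' \<le> length \<beta>" "\<beta>!(j'-1) = e" "j' = Suc i" using dj by (auto split: if_splits)
  have IH: "j' \<le> j \<and> \<alpha> = take (j - j') (drop j' \<beta>)" using Cons.IH d(1) dj by simp
  have "drop i \<beta> = \<beta>!i # drop j' \<beta>" using Cons_nth_drop_Suc[of i \<beta>] j' by simp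
  moreover have "j - i = Suc (j - j')" using j' IH by linarith
  ultimately have "take (j - i) (drop i \<beta>) = \<beta>!i # take (j - j') (drop j' \<beta>)" by simp
  then show ?case using IH j' by simp
qed simp

end

context bisep
begin

lemma normal_word_fixing_vertex_point:
  assumes "normal_word z" "pt_act z (Pt v [] 0 []) = Some (Pt v [] 0 [])"
  shows "z = [] \<or> z = [V v]"
  using assms(1)
proof (cases rule: normal_wordE)
  case (3 a \<alpha>)
  then have "pt_act (map Ed (a # \<alpha>)) (Pt v [] 0 []) = Some (Pt v [] 0 [])" using assms(2) by simp
  from path_act_height[OF this] show ?thesis by simp
qed (use assms(2) in \<open>auto split: if_splits\<close>)

lemma normal_word_traversing_path:
  assumes "normal_word z" "is_path \<beta>" "\<beta> \<noteq> []"
    and "pt_act z (Pt v \<beta> (length \<beta>) []) = Some (Pt v \<beta> 0 [])"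
  shows "z = map Ed \<beta>"
  using assms(1)
proof (cases rule: normal_wordE)
  case (3 a \<alpha>)
  then have "pt_act (map Ed (a # \<alpha>)) (Pt v \<beta> (length \<beta>) []) = Some (Pt v \<beta> 0 [])"
    using assms(4) by simp
  from path_act_segment_unique[OF this] 3 show ?thesis by auto
qed (use assms(3,4) in \<open>auto split: if_splits\<close>)

context
  fixes q :: "('v, 'e) gen list \<Rightarrow> 'k::field"
  assumes annihilated: "annihilates gen_act q" and normal: "\<And>z. q z \<noteq> 0 \<Longrightarrow> normal_word z"
begin

lemma annihilated_coeff: "act_coeff gen_act q b c = 0"
  using annihilated by (simp add: annihilates_def)

lemma annihilated_normal_empty: "q [] = 0"
  using act_coeff_single[of gen_act "[]" Junk Junk q] pt_act_Junk annihilated_coeff by simp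

lemma annihilated_normal_vertex: "q [V v] = 0"
proof -
  let ?b = "Pt v [] 0 [] :: ('v, 'e) point"
  have "act_coeff gen_act q ?b ?b = q [V v]"
  proof (rule act_coeff_single)
    show "pt_act [V v] ?b = Some ?b" by (simp add: is_path_def)
    show "z = [V v]" if "q z \<noteq> 0" "pt_act z ?b = Some ?b" for z
      using normal_word_fixing_vertex_point[OF normal] that annihilated_normal_empty by blast
  qed
  then show ?thesis using annihilated_coeff by simp
qed

lemma annihilated_normal_path:
  assumes "is_path \<beta>" "\<beta> \<noteq> []"
  shows "q (map Ed \<beta>) = 0"
proof -
  let ?b = "Pt undefined \<beta> (length \<beta>) [] :: ('v, 'e) point"
    and ?c = "Pt undefined \<beta> 0 [] :: ('v, 'e) point"
  have "act_coeff gen_act q ?b ?c = q (map Ed \<beta>)"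
  proof (rule act_coeff_single)
    show "pt_act (map Ed \<beta>) ?b = Some ?c"
      using path_act_segment[OF assms(1), where j="length \<beta>" and k="length \<beta>"] by simp
    show "z = map Ed \<beta>" if "q z \<noteq> 0" "pt_act z ?b = Some ?c" for z
      using normal_word_traversing_path[OF normal] that assms by blast
  qed
  then show ?thesis using annihilated_coeff by simp
qed

lemma annihilated_normal_zero: "q = fa_zero"
proof
  fix z
  have "q z = 0"
  proof (rule ccontr)
    assume "q z \<noteq> 0"
    with normal[OF this] show False
      by (elim normal_wordE)
        (use annihilated_normal_empty annihilated_normal_vertex annihilated_normal_path[of "_ # _"] in auto)
  qed
  then show "q z = fa_zero z" by (simp add: fa_zero_def)
qed

end

definition normal_part :: "(('v, 'e) gen list \<Rightarrow> 'k::field) \<Rightarrow> ('v, 'e) gen list \<Rightarrow> 'k" where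
  "normal_part p = fa_sum (\<lambda>w. fa_smult (p w) (nf_poly w)) {w. p w \<noteq> 0}"

lemma normal_part_normal:
  fixes p :: "('v, 'e) gen list \<Rightarrow> 'k::field"
  assumes "fa_elem PA p" "normal_part p z \<noteq> 0"
  shows "normal_word z"
proof -
  have "(\<Sum>w\<in>{w. p w \<noteq> 0}. p w * nf_poly w z) \<noteq> 0"
    using assms(2) by (simp add: normal_part_def fa_sum_def fa_smult_def)
  then obtain w where "w \<in> {w. p w \<noteq> 0}" "p w * nf_poly w z \<noteq> 0"
    by (meson sum.not_neutral_contains_not_neutral)
  then have w: "p w \<noteq> 0" "(nf_poly w z :: 'k) \<noteq> 0" by auto
  then obtain n where n: "normal_form w = Some n"
    by (cases "normal_form w") (simp_all add: nf_poly_def fa_zero_def)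
  moreover from n w(2) have "z = n" by (simp add: nf_poly_def fa_mono_def split: if_splits)
  ultimately have "normal_form w = Some z" by simp
  then show ?thesis using normal_form_normal assms(1) w(1) unfolding fa_elem_def by blast
qed

lemma fa_cong_normal_part:
  fixes p :: "('v, 'e) gen list \<Rightarrow> 'k::field"
  assumes "fa_elem PA p"
  shows "fa_cong PA PR p (normal_part p)"
proof -
  define W where "W = {w. p w \<noteq> 0}"
  have W: "finite W" "W \<subseteq> lists PA" using assms unfolding fa_elem_def W_def by auto
  have "fa_diff p (normal_part p) = fa_sum (\<lambda>w. fa_smult (p w) (fa_diff (fa_mono w) (nf_poly w))) W"
  proof
    fix z
    have "fa_sum (\<lambda>w. fa_smult (p w) (fa_diff (fa_mono w) (nf_poly w))) W z =
        (\<Sum>w\<in>W. p w * fa_mono w z) - normal_part p z"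
      by (simp add: normal_part_def W_def fa_sum_def fa_smult_def fa_diff_def algebra_simps sum_subtractf)
    also have "(\<Sum>w\<in>W. p w * fa_mono w z) = p z"
      using W(1) by (simp add: fa_mono_def W_def if_distrib sum.delta' cong: if_cong)
    finally show "fa_diff p (normal_part p) z = fa_sum (\<lambda>w. fa_smult (p w) (fa_diff (fa_mono w) (nf_poly w))) W z"
      by (simp add: fa_diff_def)
  qed
  also have "\<dots> \<in> fa_ideal PA PR"
  proof (rule fa_ideal_sum[OF W(1)], rule fa_ideal.smult)
    fix w assume "w \<in> W"
    with W(2) have "fa_cong PA PR (fa_mono w) (nf_poly w :: _ \<Rightarrow> 'k)" by (blast intro: fa_cong_nf_poly)
    then show "fa_diff (fa_mono w) (nf_poly w :: _ \<Rightarrow> 'k) \<in> fa_ideal PA PR" by (simp add: fa_cong_def)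
  qed
  finally show ?thesis unfolding fa_cong_def .
qed

end

theorem mainTheorem4:
  fixes E0 :: "'v set" and E1 :: "'e set" and r s :: "'e \<Rightarrow> 'v"
    and Cv Dv :: "'v \<Rightarrow> 'e set set" and S T :: "'e set set"
    and p :: "('v, 'e) gen list \<Rightarrow> 'k::field"
  assumes "is_bisep E0 E1 r s Cv Dv S T"
    and "fa_elem (path_alph E0 E1) p"
    and "p \<in> fa_ideal (dbl_alph E0 E1)
               (path_rels E0 E1 r s \<union> ghost_rels E0 E1 r s \<union> CL_rels E0 E1 r s Cv Dv S T)"
  shows "p \<in> fa_ideal (path_alph E0 E1) (path_rels E0 E1 r s)"
proof -
  interpret bisep E0 E1 r s Cv Dv S T by (rule bisep.intro) (rule assms(1))
  let ?q = "normal_part p"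
  have cong: "fa_cong PA PR p ?q" using assms(2) by (rule fa_cong_normal_part)
  then have "annihilates gen_act (fa_diff p ?q)"
    unfolding fa_cong_def
    by (intro CL_ideal_annihilated, elim fa_ideal_mono) (auto simp: path_alph_def dbl_alph_def)
  moreover have "annihilates gen_act p" using assms(3) by (rule CL_ideal_annihilated)
  moreover have "fa_diff p (fa_diff p ?q) = ?q" by (simp add: fa_diff_def)
  ultimately have "annihilates gen_act ?q" using annihilates_diff by metis
  then have "?q = fa_zero" using annihilated_normal_zero normal_part_normal assms(2) by blast
  moreover have "fa_diff p fa_zero = p" by (simp add: fa_diff_def fa_zero_def)
  ultimately show ?thesis using cong by (simp add: fa_cong_def)
qed

end
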